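(* Let $n\ge1$, let $\mathcal{Q}\subseteq H^2(\mathbb{T}^n)$ be a quotient module and $\theta_{\mathcal{Q}}=P_{\mathcal{Q}}1$. If $\theta_{\mathcal{Q}}\in H^\infty(\mathbb{D}^n)$, then $S_{\theta_{\mathcal{Q}}}=P_{\mathcal{Q}}T_{\theta_{\mathcal{Q}}}|_{\mathcal{Q}}=I_{\mathcal{Q}}$.
   Context: $H^2(\mathbb{T}^n)$ is the Hardy space of the polydisc $\mathbb{D}^n$; $T_\varphi f=\varphi f$ for $\varphi\in H^\infty(\mathbb{D}^n)$, $T_{z_i}$ multiplication by $z_i$. A closed subspace $\mathcal{Q}$ is a quotient module if $T_{z_i}^*\mathcal{Q}\subseteq\mathcal{Q}$ for all $i$; $P_{\mathcal{Q}}$ is the orthogonal projection onto $\mathcal{Q}$. *)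

theory Defs
  imports "HOL-Analysis.Analysis"
begin

text \<open>Elements of H^2 of the polydisc D^n are represented by their Taylor coefficient
  families indexed by multi-indices alpha :: 'n => nat, where the finite type 'n has
  n elements (n >= 1 automatically).\<close>

type_synonym 'n coeffs = "('n \<Rightarrow> nat) \<Rightarrow> complex"

definition H2 :: "('n::finite) coeffs set" where
  "H2 = {f. (\<lambda>\<alpha>. (cmod (f \<alpha>))\<^sup>2) summable_on UNIV}"

definition h2_inner :: "('n::finite) coeffs \<Rightarrow> 'n coeffs \<Rightarrow> complex" where
  "h2_inner f g = (\<Sum>\<^sub>\<infinity>\<alpha>. f \<alpha> * cnj (g \<alpha>))"

definition h2_norm :: "('n::finite) coeffs \<Rightarrow> real" where
  "h2_norm f = sqrt (\<Sum>\<^sub>\<infinity>\<alpha>. (cmod (f \<alpha>))\<^sup>2)"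

definition h2_eval :: "('n::finite) coeffs \<Rightarrow> ('n \<Rightarrow> complex) \<Rightarrow> complex" where
  "h2_eval f z = (\<Sum>\<^sub>\<infinity>\<alpha>. f \<alpha> * (\<Prod>i\<in>UNIV. z i ^ \<alpha> i))"

definition polydisc :: "('n::finite \<Rightarrow> complex) set" where
  "polydisc = {z. \<forall>i. norm (z i) < 1}"

definition Hinf :: "('n::finite) coeffs set" where
  "Hinf = {f \<in> H2. \<exists>M. \<forall>z\<in>polydisc. cmod (h2_eval f z) \<le> M}"

text \<open>Product of power series (Cauchy product): T_phi f = phi f.\<close>
definition mult :: "('n::finite) coeffs \<Rightarrow> 'n coeffs \<Rightarrow> 'n coeffs" where
  "mult \<phi> f = (\<lambda>\<alpha>. \<Sum>\<beta>\<in>{\<beta>. \<beta> \<le> \<alpha>}. \<phi> \<beta> * f (\<lambda>i. \<alpha> i - \<beta> i))"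

definition Tz_adj :: "'n::finite \<Rightarrow> 'n coeffs \<Rightarrow> 'n coeffs" where
  "Tz_adj i f = (\<lambda>\<alpha>. f (\<alpha>(i := Suc (\<alpha> i))))"

definition closed_subspace :: "('n::finite) coeffs set \<Rightarrow> bool" where
  "closed_subspace Q \<longleftrightarrow> Q \<subseteq> H2 \<and> (\<lambda>\<alpha>. 0) \<in> Q \<and>
     (\<forall>f\<in>Q. \<forall>g\<in>Q. (\<lambda>\<alpha>. f \<alpha> + g \<alpha>) \<in> Q) \<and> (\<forall>c. \<forall>f\<in>Q. (\<lambda>\<alpha>. c * f \<alpha>) \<in> Q) \<and>
     (\<forall>x f. (\<forall>k. x k \<in> Q) \<and> f \<in> H2 \<and> (\<lambda>k. h2_norm (\<lambda>\<alpha>. x k \<alpha> - f \<alpha>)) \<longlonglongrightarrow> 0 \<longrightarrow> f \<in> Q)"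

definition quotient_module :: "('n::finite) coeffs set \<Rightarrow> bool" where
  "quotient_module Q \<longleftrightarrow> closed_subspace Q \<and> (\<forall>i. \<forall>f\<in>Q. Tz_adj i f \<in> Q)"

definition proj :: "('n::finite) coeffs set \<Rightarrow> 'n coeffs \<Rightarrow> 'n coeffs" where
  "proj Q f = (THE g. g \<in> Q \<and> (\<forall>h\<in>Q. h2_inner (\<lambda>\<alpha>. f \<alpha> - g \<alpha>) h = 0))"

definition one :: "('n::finite) coeffs" where
  "one = (\<lambda>\<alpha>. if \<alpha> = (\<lambda>i. 0) then 1 else 0)"

definition compression :: "('n::finite) coeffs set \<Rightarrow> 'n coeffs \<Rightarrow> 'n coeffs \<Rightarrow> 'n coeffs" where
  "compression Q \<phi> f = proj Q (mult \<phi> f)"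

end

theory Submission
  imports Defs
begin

text \<open>Write \<open>\<theta> = P\<^sub>Q 1\<close> and \<open>\<psi> = 1 - \<theta>\<close>, so that \<open>\<psi> \<bottom> Q\<close>. As \<open>Q\<close> is co-invariant,
  \<open>Q\<^sup>\<bottom>\<close> is invariant under multiplication by monomials, hence \<open>\<psi> p \<bottom> Q\<close> for every
  polynomial \<open>p\<close>. Since \<open>\<psi>\<close> is bounded by some \<open>M\<close> on the polydisc, \<open>T\<^sub>\<psi>\<close> is bounded with
  norm at most \<open>M\<close> (discrete Parseval on grids of roots of unity of radius \<open>r < 1\<close>, then
  \<open>r \<rightarrow> 1\<close>), and density of polynomials gives \<open>\<psi> f \<bottom> Q\<close> for all \<open>f \<in> H\<^sup>2\<close>. For \<open>f \<in> Q\<close>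
  this says that \<open>\<theta> f - f = - \<psi> f\<close> is orthogonal to \<open>Q\<close>, i.e. \<open>P\<^sub>Q (\<theta> f) = f\<close>.\<close>

section \<open>Square-summable coefficient families\<close>

definition h2_sqnorm :: "('n::finite) coeffs \<Rightarrow> real" where
  "h2_sqnorm f = (\<Sum>\<^sub>\<infinity>\<alpha>. (cmod (f \<alpha>))\<^sup>2)"

lemma has_sum_diff:
  fixes f g :: "'a \<Rightarrow> 'b::topological_ab_group_add"
  assumes "(f has_sum a) A" "(g has_sum b) A"
  shows "((\<lambda>x. f x - g x) has_sum (a - b)) A"
proof -
  have "((\<lambda>x. - g x) has_sum - b) A" using assms(2) by (simp add: has_sum_uminus)
  from has_sum_add[OF assms(1) this] show ?thesis by simp
qed

lemma has_sum_h2_sqnorm: "f \<in> H2 \<Longrightarrow> ((\<lambda>\<alpha>. (cmod (f \<alpha>))\<^sup>2) has_sum h2_sqnorm f) UNIV"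
  unfolding H2_def h2_sqnorm_def by auto

lemma h2_sqnorm_nonneg: "h2_sqnorm f \<ge> 0"
  unfolding h2_sqnorm_def by (rule infsum_nonneg) auto

lemma h2_norm_eq_sqrt: "h2_norm f = sqrt (h2_sqnorm f)"
  by (simp add: h2_norm_def h2_sqnorm_def)

lemma sum_le_h2_sqnorm: "f \<in> H2 \<Longrightarrow> finite B \<Longrightarrow> (\<Sum>\<alpha>\<in>B. (cmod (f \<alpha>))\<^sup>2) \<le> h2_sqnorm f"
  unfolding h2_sqnorm_def H2_def by (rule finite_sum_le_infsum) auto

lemma coeff_le_h2_sqnorm: "f \<in> H2 \<Longrightarrow> (cmod (f \<alpha>))\<^sup>2 \<le> h2_sqnorm f"
  using sum_le_h2_sqnorm[of f "{\<alpha>}"] by simp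

lemma H2_bounded_sums:
  assumes "\<And>B. finite B \<Longrightarrow> (\<Sum>\<alpha>\<in>B. (cmod (u \<alpha>))\<^sup>2) \<le> K"
  shows "u \<in> H2" and "h2_sqnorm u \<le> K"
proof -
  show H2: "u \<in> H2"
    unfolding H2_def by (auto intro!: nonneg_bdd_above_summable_on bdd_aboveI2 assms)
  show "h2_sqnorm u \<le> K"
    unfolding h2_sqnorm_def by (rule infsum_le_finite_sums) (use H2 assms in \<open>auto simp: H2_def\<close>)
qed

lemma H2_finite_support:
  assumes "finite {\<alpha>. f \<alpha> \<noteq> 0}"
  shows "f \<in> H2"
proof -
  have "(\<lambda>\<alpha>. (cmod (f \<alpha>))\<^sup>2) summable_on {\<alpha>. f \<alpha> \<noteq> 0}"
    using assms by (rule summable_on_finite)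
  then show ?thesis
    unfolding H2_def mem_Collect_eq by (rule summable_on_cong_neutral[THEN iffD1, rotated -1]) auto
qed

lemma H2_add:
  assumes "f \<in> H2" "g \<in> H2"
  shows "(\<lambda>\<alpha>. f \<alpha> + g \<alpha>) \<in> H2"
proof -
  have bound: "(cmod (f \<alpha> + g \<alpha>))\<^sup>2 \<le> 2 * (cmod (f \<alpha>))\<^sup>2 + 2 * (cmod (g \<alpha>))\<^sup>2" for \<alpha>
  proof -
    have "(cmod (f \<alpha> + g \<alpha>))\<^sup>2 \<le> (cmod (f \<alpha>) + cmod (g \<alpha>))\<^sup>2"
      by (simp add: power_mono norm_triangle_ineq)
    also have "\<dots> \<le> 2 * (cmod (f \<alpha>))\<^sup>2 + 2 * (cmod (g \<alpha>))\<^sup>2"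
      by (smt (verit) power2_sum sum_squares_bound)
    finally show ?thesis .
  qed
  have "(\<lambda>\<alpha>. 2 * (cmod (f \<alpha>))\<^sup>2 + 2 * (cmod (g \<alpha>))\<^sup>2) summable_on UNIV"
    using assms by (intro summable_on_add summable_on_cmult_right) (auto simp: H2_def)
  then show ?thesis
    unfolding H2_def mem_Collect_eq by (rule summable_on_comparison_test) (rule bound, simp)
qed

lemma H2_scale: "f \<in> H2 \<Longrightarrow> (\<lambda>\<alpha>. c * f \<alpha>) \<in> H2"
  unfolding H2_def
  by (auto simp: norm_mult power_mult_distrib intro: summable_on_cmult_right)

lemma H2_diff: "f \<in> H2 \<Longrightarrow> g \<in> H2 \<Longrightarrow> (\<lambda>\<alpha>. f \<alpha> - g \<alpha>) \<in> H2"
  using H2_add[of f "\<lambda>\<alpha>. -1 * g \<alpha>"] H2_scale[of g "-1"] by simp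

lemma H2_sum: "finite C \<Longrightarrow> (\<And>\<gamma>. \<gamma> \<in> C \<Longrightarrow> F \<gamma> \<in> H2) \<Longrightarrow> (\<lambda>\<alpha>. \<Sum>\<gamma>\<in>C. F \<gamma> \<alpha>) \<in> H2"
proof (induction C rule: finite_induct)
  case empty
  show ?case by (simp add: H2_finite_support)
next
  case (insert x C)
  then show ?case by (simp add: H2_add)
qed

lemma h2_sqnorm_scale: "h2_sqnorm (\<lambda>\<alpha>. c * f \<alpha>) = (cmod c)\<^sup>2 * h2_sqnorm f"
  unfolding h2_sqnorm_def by (simp add: norm_mult power_mult_distrib infsum_cmult_right')

lemma h2_sqnorm_eq_0_iff:
  assumes "f \<in> H2"
  shows "h2_sqnorm f = 0 \<longleftrightarrow> f = (\<lambda>\<alpha>. 0)"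
proof
  assume "h2_sqnorm f = 0"
  then have "(cmod (f \<alpha>))\<^sup>2 \<le> 0" for \<alpha> using coeff_le_h2_sqnorm[OF assms] by metis
  then show "f = (\<lambda>\<alpha>. 0)" by (simp add: fun_eq_iff)
qed (simp add: h2_sqnorm_def)

lemma abs_summable_h2_inner:
  assumes "f \<in> H2" "g \<in> H2"
  shows "(\<lambda>\<alpha>. norm (f \<alpha> * cnj (g \<alpha>))) summable_on UNIV"
proof -
  have bound: "norm (f \<alpha> * cnj (g \<alpha>)) \<le> (cmod (f \<alpha>))\<^sup>2 + (cmod (g \<alpha>))\<^sup>2" for \<alpha>
  proof -
    have "2 * (cmod (f \<alpha>) * cmod (g \<alpha>)) \<le> (cmod (f \<alpha>))\<^sup>2 + (cmod (g \<alpha>))\<^sup>2"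
      using sum_squares_bound[of "cmod (f \<alpha>)" "cmod (g \<alpha>)"] by (simp add: mult.assoc)
    moreover have "0 \<le> cmod (f \<alpha>) * cmod (g \<alpha>)" by simp
    ultimately show ?thesis by (simp only: norm_mult complex_mod_cnj)
  qed
  have "(\<lambda>\<alpha>. (cmod (f \<alpha>))\<^sup>2 + (cmod (g \<alpha>))\<^sup>2) summable_on UNIV"
    using assms by (intro summable_on_add) (auto simp: H2_def)
  then show ?thesis by (rule summable_on_comparison_test) (rule bound, simp)
qed

lemma has_sum_h2_inner:
  "f \<in> H2 \<Longrightarrow> g \<in> H2 \<Longrightarrow> ((\<lambda>\<alpha>. f \<alpha> * cnj (g \<alpha>)) has_sum h2_inner f g) UNIV"
  unfolding h2_inner_def by (intro has_sum_infsum abs_summable_summable[OF abs_summable_h2_inner])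

lemma h2_inner_add_left:
  "f \<in> H2 \<Longrightarrow> g \<in> H2 \<Longrightarrow> h \<in> H2 \<Longrightarrow>
    h2_inner (\<lambda>\<alpha>. f \<alpha> + g \<alpha>) h = h2_inner f h + h2_inner g h"
  unfolding distrib_right h2_inner_def[of "\<lambda>\<alpha>. f \<alpha> + g \<alpha>"]
  by (intro infsumI has_sum_add has_sum_h2_inner)

lemma h2_inner_scale_left: "h2_inner (\<lambda>\<alpha>. c * f \<alpha>) h = c * h2_inner f h"
  unfolding h2_inner_def by (simp add: mult.assoc infsum_cmult_right')

lemma h2_inner_diff_left:
  "f \<in> H2 \<Longrightarrow> g \<in> H2 \<Longrightarrow> h \<in> H2 \<Longrightarrow>
    h2_inner (\<lambda>\<alpha>. f \<alpha> - g \<alpha>) h = h2_inner f h - h2_inner g h"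
  unfolding left_diff_distrib h2_inner_def[of "\<lambda>\<alpha>. f \<alpha> - g \<alpha>"]
  by (intro infsumI has_sum_diff has_sum_h2_inner)

lemma h2_inner_sum_left:
  "finite C \<Longrightarrow> (\<And>\<gamma>. \<gamma> \<in> C \<Longrightarrow> F \<gamma> \<in> H2) \<Longrightarrow> h \<in> H2 \<Longrightarrow>
    h2_inner (\<lambda>\<alpha>. \<Sum>\<gamma>\<in>C. F \<gamma> \<alpha>) h = (\<Sum>\<gamma>\<in>C. h2_inner (F \<gamma>) h)"
proof (induction C rule: finite_induct)
  case empty
  show ?case by (simp add: h2_inner_def)
next
  case (insert x C)
  then show ?case by (simp add: h2_inner_add_left H2_sum)
qed

lemma h2_inner_self:
  assumes "f \<in> H2"
  shows "h2_inner f f = complex_of_real (h2_sqnorm f)"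
proof -
  have "((\<lambda>\<alpha>. complex_of_real ((cmod (f \<alpha>))\<^sup>2)) has_sum complex_of_real (h2_sqnorm f)) UNIV"
    by (intro has_sum_of_real has_sum_h2_sqnorm assms)
  then have "((\<lambda>\<alpha>. f \<alpha> * cnj (f \<alpha>)) has_sum complex_of_real (h2_sqnorm f)) UNIV"
    by (simp only: complex_norm_square)
  then show ?thesis unfolding h2_inner_def by (rule infsumI)
qed

lemma h2_sqnorm_diff_scale:
  assumes "u \<in> H2" "h \<in> H2"
  shows "h2_sqnorm (\<lambda>\<alpha>. u \<alpha> - t * h \<alpha>)
    = h2_sqnorm u - 2 * Re (cnj t * h2_inner u h) + (cmod t)\<^sup>2 * h2_sqnorm h"
proof -
  have expand: "(cmod (a - t * b))\<^sup>2
      = (cmod a)\<^sup>2 - 2 * Re (cnj t * (a * cnj b)) + (cmod t)\<^sup>2 * (cmod b)\<^sup>2" for a b :: complex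
    by (simp only: cmod_power2) (simp add: power2_eq_square algebra_simps)
  have "((\<lambda>\<alpha>. (cmod (u \<alpha> - t * h \<alpha>))\<^sup>2) has_sum
      (h2_sqnorm u - 2 * Re (cnj t * h2_inner u h) + (cmod t)\<^sup>2 * h2_sqnorm h)) UNIV"
    unfolding expand
    by (intro has_sum_add has_sum_diff has_sum_cmult_right has_sum_Re has_sum_h2_sqnorm
        has_sum_h2_inner assms)
  then show ?thesis by (simp add: h2_sqnorm_def infsumI)
qed

lemma h2_sqnorm_diff_inner_scale:
  assumes "u \<in> H2" "h \<in> H2"
  shows "h2_sqnorm (\<lambda>\<alpha>. u \<alpha> - (of_real s * h2_inner u h) * h \<alpha>)
    = h2_sqnorm u - s * (cmod (h2_inner u h))\<^sup>2 * (2 - s * h2_sqnorm h)"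
  unfolding h2_sqnorm_diff_scale[OF assms]
  by (simp add: norm_mult power_mult_distrib cmod_power2) (simp add: algebra_simps power2_eq_square)

lemma h2_sqnorm_parallelogram:
  assumes "a \<in> H2" "b \<in> H2"
  shows "h2_sqnorm (\<lambda>\<alpha>. a \<alpha> - b \<alpha>) + h2_sqnorm (\<lambda>\<alpha>. a \<alpha> + b \<alpha>) = 2 * h2_sqnorm a + 2 * h2_sqnorm b"
  using h2_sqnorm_diff_scale[OF assms, of 1] h2_sqnorm_diff_scale[OF assms, of "-1"] by simp

lemma h2_cauchy_schwarz:
  assumes "u \<in> H2" "h \<in> H2"
  shows "(cmod (h2_inner u h))\<^sup>2 \<le> h2_sqnorm u * h2_sqnorm h"
proof (cases "h2_sqnorm h = 0")
  case True
  then have "h = (\<lambda>\<alpha>. 0)" using h2_sqnorm_eq_0_iff assms(2) by blast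
  then show ?thesis by (simp add: h2_inner_def h2_sqnorm_def)
next
  case False
  then have P: "h2_sqnorm h > 0" using h2_sqnorm_nonneg[of h] by simp
  have "0 \<le> h2_sqnorm (\<lambda>\<alpha>. u \<alpha> - (of_real (1 / h2_sqnorm h) * h2_inner u h) * h \<alpha>)"
    by (rule h2_sqnorm_nonneg)
  also have "\<dots> = h2_sqnorm u - (cmod (h2_inner u h))\<^sup>2 / h2_sqnorm h"
    unfolding h2_sqnorm_diff_inner_scale[OF assms] using P by simp
  finally show ?thesis using P by (simp add: pos_divide_le_eq)
qed

lemma H2_pointwise_limit:
  assumes lim: "\<And>\<alpha>. (\<lambda>k. u k \<alpha>) \<longlonglongrightarrow> v \<alpha>"
    and bound: "eventually (\<lambda>k. u k \<in> H2 \<and> h2_sqnorm (u k) \<le> C) sequentially"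
  shows "v \<in> H2" and "h2_sqnorm v \<le> C"
proof -
  have "(\<Sum>\<alpha>\<in>B. (cmod (v \<alpha>))\<^sup>2) \<le> C" if "finite B" for B
  proof (rule tendsto_upperbound)
    show "(\<lambda>k. \<Sum>\<alpha>\<in>B. (cmod (u k \<alpha>))\<^sup>2) \<longlonglongrightarrow> (\<Sum>\<alpha>\<in>B. (cmod (v \<alpha>))\<^sup>2)"
      by (intro tendsto_intros lim)
    show "eventually (\<lambda>k. (\<Sum>\<alpha>\<in>B. (cmod (u k \<alpha>))\<^sup>2) \<le> C) sequentially"
      using bound by eventually_elim (use sum_le_h2_sqnorm that in fastforce)
  qed simp
  then show "v \<in> H2" "h2_sqnorm v \<le> C" by (blast intro: H2_bounded_sums)+
qed

lemma H2_Cauchy_coeff: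
  assumes H2: "\<And>k. G k \<in> H2"
    and Cauchy: "\<And>\<epsilon>. \<epsilon> > 0 \<Longrightarrow> \<exists>K. \<forall>j\<ge>K. \<forall>k\<ge>K. h2_sqnorm (\<lambda>\<alpha>. G j \<alpha> - G k \<alpha>) < \<epsilon>"
  shows "Cauchy (\<lambda>k. G k \<alpha>)"
proof (rule metric_CauchyI)
  fix e :: real assume "e > 0"
  then obtain K where K: "\<forall>j\<ge>K. \<forall>k\<ge>K. h2_sqnorm (\<lambda>\<alpha>. G j \<alpha> - G k \<alpha>) < e\<^sup>2"
    using Cauchy[of "e\<^sup>2"] by auto
  have "cmod (G j \<alpha> - G k \<alpha>) < e" if "j \<ge> K" "k \<ge> K" for j k
  proof (rule power_less_imp_less_base)
    show "(cmod (G j \<alpha> - G k \<alpha>))\<^sup>2 < e\<^sup>2"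
      using coeff_le_h2_sqnorm[OF H2_diff[OF H2[of j] H2[of k]], of \<alpha>] K that by force
  qed (use \<open>e > 0\<close> in simp)
  then show "\<exists>M. \<forall>m\<ge>M. \<forall>n\<ge>M. dist (G m \<alpha>) (G n \<alpha>) < e"
    by (auto simp: dist_norm)
qed

lemma H2_complete:
  assumes H2: "\<And>k. G k \<in> H2"
    and Cauchy: "\<And>\<epsilon>. \<epsilon> > 0 \<Longrightarrow> \<exists>K. \<forall>j\<ge>K. \<forall>k\<ge>K. h2_sqnorm (\<lambda>\<alpha>. G j \<alpha> - G k \<alpha>) < \<epsilon>"
  obtains g where "g \<in> H2" "\<And>\<alpha>. (\<lambda>k. G k \<alpha>) \<longlonglongrightarrow> g \<alpha>"
    and "(\<lambda>k. h2_sqnorm (\<lambda>\<alpha>. G k \<alpha> - g \<alpha>)) \<longlonglongrightarrow> 0"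
proof -
  have "Cauchy (\<lambda>k. G k \<alpha>)" for \<alpha> using H2 Cauchy by (rule H2_Cauchy_coeff)
  then obtain g where lim: "\<And>\<alpha>. (\<lambda>k. G k \<alpha>) \<longlonglongrightarrow> g \<alpha>"
    unfolding Cauchy_convergent_iff convergent_def by metis
  have tail: "(\<lambda>\<alpha>. G k \<alpha> - g \<alpha>) \<in> H2 \<and> h2_sqnorm (\<lambda>\<alpha>. G k \<alpha> - g \<alpha>) \<le> \<epsilon>"
    if K: "\<forall>j\<ge>K. \<forall>k\<ge>K. h2_sqnorm (\<lambda>\<alpha>. G j \<alpha> - G k \<alpha>) < \<epsilon>" and "k \<ge> K" for \<epsilon> K k
  proof -
    have "(\<lambda>\<alpha>. G k \<alpha> - G j \<alpha>) \<in> H2 \<and> h2_sqnorm (\<lambda>\<alpha>. G k \<alpha> - G j \<alpha>) \<le> \<epsilon>"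
      if "j \<ge> K" for j
      using K \<open>k \<ge> K\<close> that H2_diff[OF H2[of k] H2[of j]] by (simp add: less_imp_le)
    then have "eventually (\<lambda>j. (\<lambda>\<alpha>. G k \<alpha> - G j \<alpha>) \<in> H2 \<and>
        h2_sqnorm (\<lambda>\<alpha>. G k \<alpha> - G j \<alpha>) \<le> \<epsilon>) sequentially"
      by (rule eventually_sequentiallyI)
    moreover have "(\<lambda>j. G k \<alpha> - G j \<alpha>) \<longlonglongrightarrow> G k \<alpha> - g \<alpha>" for \<alpha>
      by (intro tendsto_intros lim)
    ultimately show ?thesis
      using H2_pointwise_limit[of "\<lambda>j \<alpha>. G k \<alpha> - G j \<alpha>" "\<lambda>\<alpha>. G k \<alpha> - g \<alpha>" \<epsilon>] by simp
  qed
  obtain K1 where K1: "\<forall>j\<ge>K1. \<forall>k\<ge>K1. h2_sqnorm (\<lambda>\<alpha>. G j \<alpha> - G k \<alpha>) < 1"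
    using Cauchy[of 1] by auto
  have "(\<lambda>\<alpha>. G K1 \<alpha> - (G K1 \<alpha> - g \<alpha>)) \<in> H2"
    using H2_diff[OF H2[of K1], of "\<lambda>\<alpha>. G K1 \<alpha> - g \<alpha>"] tail[OF K1 order_refl] by simp
  then have "g \<in> H2" by simp
  moreover have "(\<lambda>k. h2_sqnorm (\<lambda>\<alpha>. G k \<alpha> - g \<alpha>)) \<longlonglongrightarrow> 0"
  proof (rule LIMSEQ_I)
    fix r :: real assume "r > 0"
    then obtain K where K: "\<forall>j\<ge>K. \<forall>k\<ge>K. h2_sqnorm (\<lambda>\<alpha>. G j \<alpha> - G k \<alpha>) < r / 2"
      using Cauchy[of "r / 2"] by auto
    have "norm (h2_sqnorm (\<lambda>\<alpha>. G k \<alpha> - g \<alpha>) - 0) < r" if "k \<ge> K" for k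
    proof -
      have "h2_sqnorm (\<lambda>\<alpha>. G k \<alpha> - g \<alpha>) \<le> r / 2" using tail[OF K that] by simp
      then show ?thesis using h2_sqnorm_nonneg[of "\<lambda>\<alpha>. G k \<alpha> - g \<alpha>"] \<open>r > 0\<close> by simp
    qed
    then show "\<exists>K. \<forall>k\<ge>K. norm (h2_sqnorm (\<lambda>\<alpha>. G k \<alpha> - g \<alpha>) - 0) < r" by auto
  qed
  ultimately show ?thesis using that lim by simp
qed

section \<open>Orthogonal projection onto a closed subspace\<close>

lemma closed_subspaceD:
  assumes "closed_subspace Q"
  shows closed_subspace_H2: "Q \<subseteq> H2"
    and closed_subspace_add: "\<lbrakk>f \<in> Q; g \<in> Q\<rbrakk> \<Longrightarrow> (\<lambda>\<alpha>. f \<alpha> + g \<alpha>) \<in> Q"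
    and closed_subspace_scale: "f \<in> Q \<Longrightarrow> (\<lambda>\<alpha>. c * f \<alpha>) \<in> Q"
    and closed_subspace_limit: "\<lbrakk>\<And>k. x k \<in> Q; f \<in> H2; (\<lambda>k. h2_norm (\<lambda>\<alpha>. x k \<alpha> - f \<alpha>)) \<longlonglongrightarrow> 0\<rbrakk>
      \<Longrightarrow> f \<in> Q"
  using assms unfolding closed_subspace_def by blast+

lemma closed_subspace_diff:
  "\<lbrakk>closed_subspace Q; f \<in> Q; g \<in> Q\<rbrakk> \<Longrightarrow> (\<lambda>\<alpha>. f \<alpha> - g \<alpha>) \<in> Q"
  using closed_subspace_add[of Q f "\<lambda>\<alpha>. -1 * g \<alpha>"] closed_subspace_scale[of Q g "-1"] by simp

lemma closed_subspace_minimising_sequence: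
  assumes Q: "closed_subspace Q"
  obtains d G where "\<And>g. g \<in> Q \<Longrightarrow> d \<le> h2_sqnorm (\<lambda>\<alpha>. x \<alpha> - g \<alpha>)" "\<And>k. G k \<in> Q"
    "\<And>k. h2_sqnorm (\<lambda>\<alpha>. x \<alpha> - G k \<alpha>) < d + 1 / real (Suc k)"
proof -
  define d where "d = (INF g\<in>Q. h2_sqnorm (\<lambda>\<alpha>. x \<alpha> - g \<alpha>))"
  have bdd: "bdd_below ((\<lambda>g. h2_sqnorm (\<lambda>\<alpha>. x \<alpha> - g \<alpha>)) ` Q)"
    by (auto intro: h2_sqnorm_nonneg)
  have lower: "d \<le> h2_sqnorm (\<lambda>\<alpha>. x \<alpha> - g \<alpha>)" if "g \<in> Q" for g
    unfolding d_def using bdd that by (rule cINF_lower)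
  have "\<exists>g\<in>Q. h2_sqnorm (\<lambda>\<alpha>. x \<alpha> - g \<alpha>) < d + 1 / real (Suc k)" for k
  proof -
    have "(\<lambda>\<alpha>. 0) \<in> Q" using Q by (simp add: closed_subspace_def)
    moreover have "(INF g\<in>Q. h2_sqnorm (\<lambda>\<alpha>. x \<alpha> - g \<alpha>)) < d + 1 / real (Suc k)" by (simp add: d_def)
    ultimately show ?thesis using bdd by (subst (asm) cINF_less_iff) auto
  qed
  then obtain G where "\<And>k. G k \<in> Q" "\<And>k. h2_sqnorm (\<lambda>\<alpha>. x \<alpha> - G k \<alpha>) < d + 1 / real (Suc k)"
    by metis
  then show thesis using that lower by blast
qed

lemma eventually_one_over_Suc_less: "e > 0 \<Longrightarrow> eventually (\<lambda>k. 1 / real (Suc k) < e) sequentially"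
  using order_tendstoD(2)[OF LIMSEQ_inverse_real_of_nat] by (simp add: inverse_eq_divide)

text \<open>The midpoint of two members of a minimising sequence again lies in \<open>Q\<close>, so the
  parallelogram law makes the sequence Cauchy.\<close>
lemma H2_minimising_sequence_Cauchy:
  assumes Q: "closed_subspace Q" and x: "x \<in> H2" and GQ: "\<And>k. G k \<in> Q"
    and lower: "\<And>g. g \<in> Q \<Longrightarrow> d \<le> h2_sqnorm (\<lambda>\<alpha>. x \<alpha> - g \<alpha>)"
    and G: "\<And>k. h2_sqnorm (\<lambda>\<alpha>. x \<alpha> - G k \<alpha>) < d + 1 / real (Suc k)" and "\<epsilon> > 0"
  shows "\<exists>K. \<forall>j\<ge>K. \<forall>k\<ge>K. h2_sqnorm (\<lambda>\<alpha>. G j \<alpha> - G k \<alpha>) < \<epsilon>"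
proof -
  have GH: "G k \<in> H2" for k using GQ closed_subspace_H2[OF Q] by blast
  have close: "h2_sqnorm (\<lambda>\<alpha>. G j \<alpha> - G k \<alpha>) \<le> 2 * (1 / real (Suc j)) + 2 * (1 / real (Suc k))"
    for j k
  proof -
    define m where "m = (\<lambda>\<alpha>. (1/2) * (G j \<alpha> + G k \<alpha>))"
    have "m \<in> Q" unfolding m_def by (intro closed_subspace_scale closed_subspace_add Q GQ)
    then have "d \<le> h2_sqnorm (\<lambda>\<alpha>. x \<alpha> - m \<alpha>)" by (rule lower)
    moreover have "(\<lambda>\<alpha>. (x \<alpha> - G k \<alpha>) - (x \<alpha> - G j \<alpha>)) = (\<lambda>\<alpha>. G j \<alpha> - G k \<alpha>)"
      by (simp add: fun_eq_iff)
    moreover have "(\<lambda>\<alpha>. (x \<alpha> - G k \<alpha>) + (x \<alpha> - G j \<alpha>)) = (\<lambda>\<alpha>. 2 * (x \<alpha> - m \<alpha>))"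
      by (simp add: m_def fun_eq_iff algebra_simps)
    moreover have "h2_sqnorm (\<lambda>\<alpha>. 2 * (x \<alpha> - m \<alpha>)) = 4 * h2_sqnorm (\<lambda>\<alpha>. x \<alpha> - m \<alpha>)"
      using h2_sqnorm_scale[of 2 "\<lambda>\<alpha>. x \<alpha> - m \<alpha>"] by simp
    ultimately show ?thesis
      using h2_sqnorm_parallelogram[OF H2_diff[OF x GH[of k]] H2_diff[OF x GH[of j]]]
        G[of j] G[of k] by simp
  qed
  obtain K where K: "\<And>k. k \<ge> K \<Longrightarrow> 1 / real (Suc k) < \<epsilon> / 4"
    using eventually_one_over_Suc_less[of "\<epsilon> / 4"] \<open>\<epsilon> > 0\<close> by (auto simp: eventually_sequentially)
  have "h2_sqnorm (\<lambda>\<alpha>. G j \<alpha> - G k \<alpha>) < \<epsilon>" if "j \<ge> K" "k \<ge> K" for j k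
    using close[of j k] K[OF that(1)] K[OF that(2)] by linarith
  then show ?thesis by blast
qed

lemma H2_closest_point_exists:
  assumes Q: "closed_subspace Q" and x: "x \<in> H2"
  obtains g where "g \<in> Q" "\<And>g'. g' \<in> Q \<Longrightarrow> h2_sqnorm (\<lambda>\<alpha>. x \<alpha> - g \<alpha>) \<le> h2_sqnorm (\<lambda>\<alpha>. x \<alpha> - g' \<alpha>)"
proof -
  obtain d G where lower: "\<And>g. g \<in> Q \<Longrightarrow> d \<le> h2_sqnorm (\<lambda>\<alpha>. x \<alpha> - g \<alpha>)" and GQ: "\<And>k. G k \<in> Q"
    and G: "\<And>k. h2_sqnorm (\<lambda>\<alpha>. x \<alpha> - G k \<alpha>) < d + 1 / real (Suc k)"
    using closed_subspace_minimising_sequence[OF Q] by blast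
  have GH: "G k \<in> H2" for k using GQ closed_subspace_H2[OF Q] by blast
  obtain g where gH: "g \<in> H2" and lim: "\<And>\<alpha>. (\<lambda>k. G k \<alpha>) \<longlonglongrightarrow> g \<alpha>"
    and conv: "(\<lambda>k. h2_sqnorm (\<lambda>\<alpha>. G k \<alpha> - g \<alpha>)) \<longlonglongrightarrow> 0"
    using H2_complete[of G] GH H2_minimising_sequence_Cauchy[of Q x G d] Q x GQ lower G by blast
  have "g \<in> Q"
  proof (rule closed_subspace_limit[OF Q GQ gH])
    show "(\<lambda>k. h2_norm (\<lambda>\<alpha>. G k \<alpha> - g \<alpha>)) \<longlonglongrightarrow> 0"
      unfolding h2_norm_eq_sqrt using tendsto_real_sqrt[OF conv] by simp
  qed
  moreover have "h2_sqnorm (\<lambda>\<alpha>. x \<alpha> - g \<alpha>) \<le> d + e" if "e > 0" for e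
  proof (rule H2_pointwise_limit(2))
    show "(\<lambda>k. x \<alpha> - G k \<alpha>) \<longlonglongrightarrow> x \<alpha> - g \<alpha>" for \<alpha> by (intro tendsto_intros lim)
    show "eventually (\<lambda>k. (\<lambda>\<alpha>. x \<alpha> - G k \<alpha>) \<in> H2 \<and> h2_sqnorm (\<lambda>\<alpha>. x \<alpha> - G k \<alpha>) \<le> d + e)
        sequentially"
      using eventually_one_over_Suc_less[OF \<open>e > 0\<close>]
    proof eventually_elim
      case (elim k)
      then show ?case using G[of k] H2_diff[OF x GH[of k]] by simp
    qed
  qed
  then have "h2_sqnorm (\<lambda>\<alpha>. x \<alpha> - g \<alpha>) \<le> d" by (rule field_le_epsilon)
  ultimately show ?thesis using that lower by fastforce
qed

lemma H2_closest_point_orthogonal: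
  assumes Q: "closed_subspace Q" and x: "x \<in> H2" and g: "g \<in> Q"
    and min: "\<And>g'. g' \<in> Q \<Longrightarrow> h2_sqnorm (\<lambda>\<alpha>. x \<alpha> - g \<alpha>) \<le> h2_sqnorm (\<lambda>\<alpha>. x \<alpha> - g' \<alpha>)"
    and h: "h \<in> Q"
  shows "h2_inner (\<lambda>\<alpha>. x \<alpha> - g \<alpha>) h = 0"
proof -
  have gH: "g \<in> H2" and hH: "h \<in> H2" using g h closed_subspace_H2[OF Q] by auto
  define c where "c = h2_inner (\<lambda>\<alpha>. x \<alpha> - g \<alpha>) h"
  define s where "s = 1 / (h2_sqnorm h + 1)"
  have s: "s > 0" "s * h2_sqnorm h < 1"
    using h2_sqnorm_nonneg[of h] by (auto simp: s_def field_simps)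
  have "(\<lambda>\<alpha>. g \<alpha> + (of_real s * c) * h \<alpha>) \<in> Q"
    by (intro closed_subspace_add closed_subspace_scale Q g h)
  then have "h2_sqnorm (\<lambda>\<alpha>. x \<alpha> - g \<alpha>) \<le> h2_sqnorm (\<lambda>\<alpha>. (x \<alpha> - g \<alpha>) - (of_real s * c) * h \<alpha>)"
    using min by (simp add: algebra_simps)
  also have "\<dots> = h2_sqnorm (\<lambda>\<alpha>. x \<alpha> - g \<alpha>) - s * (cmod c)\<^sup>2 * (2 - s * h2_sqnorm h)"
    using h2_sqnorm_diff_inner_scale[OF H2_diff[OF x gH] hH, of s] unfolding c_def .
  finally have "(cmod c)\<^sup>2 * (s * (2 - s * h2_sqnorm h)) \<le> 0" by (simp add: mult_ac)
  moreover have "s * (2 - s * h2_sqnorm h) > 0" using s by simp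
  ultimately have "(cmod c)\<^sup>2 \<le> 0" by (metis mult_le_cancel_right_pos mult_zero_left)
  then show ?thesis by (simp add: c_def)
qed

lemma proj_eqI:
  assumes Q: "closed_subspace Q" and x: "x \<in> H2" and g: "g \<in> Q"
    and orth: "\<And>h. h \<in> Q \<Longrightarrow> h2_inner (\<lambda>\<alpha>. x \<alpha> - g \<alpha>) h = 0"
  shows "proj Q x = g"
  unfolding proj_def
proof (rule the_equality)
  show "g \<in> Q \<and> (\<forall>h\<in>Q. h2_inner (\<lambda>\<alpha>. x \<alpha> - g \<alpha>) h = 0)" using g orth by blast
  fix g' assume g': "g' \<in> Q \<and> (\<forall>h\<in>Q. h2_inner (\<lambda>\<alpha>. x \<alpha> - g' \<alpha>) h = 0)"
  define h where "h = (\<lambda>\<alpha>. g' \<alpha> - g \<alpha>)"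
  have hQ: "h \<in> Q" unfolding h_def using Q g g' by (blast intro: closed_subspace_diff)
  have H2: "g \<in> H2" "g' \<in> H2" "h \<in> H2" using g g' hQ closed_subspace_H2[OF Q] by auto
  have "(\<lambda>\<alpha>. (x \<alpha> - g \<alpha>) - (x \<alpha> - g' \<alpha>)) = h" by (auto simp: h_def)
  then have "h2_inner h h = h2_inner (\<lambda>\<alpha>. x \<alpha> - g \<alpha>) h - h2_inner (\<lambda>\<alpha>. x \<alpha> - g' \<alpha>) h"
    using h2_inner_diff_left[OF H2_diff[OF x H2(1)] H2_diff[OF x H2(2)] H2(3)] by simp
  then have "h2_sqnorm h = 0" using orth g' hQ h2_inner_self[OF H2(3)] by simp
  then show "g' = g" using h2_sqnorm_eq_0_iff[OF H2(3)] by (auto simp: h_def fun_eq_iff)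
qed

lemma proj_orthogonal:
  assumes Q: "closed_subspace Q" and x: "x \<in> H2"
  shows "proj Q x \<in> Q" and "\<And>h. h \<in> Q \<Longrightarrow> h2_inner (\<lambda>\<alpha>. x \<alpha> - proj Q x \<alpha>) h = 0"
proof -
  obtain g where g: "g \<in> Q"
    and min: "\<And>g'. g' \<in> Q \<Longrightarrow> h2_sqnorm (\<lambda>\<alpha>. x \<alpha> - g \<alpha>) \<le> h2_sqnorm (\<lambda>\<alpha>. x \<alpha> - g' \<alpha>)"
    using H2_closest_point_exists[OF Q x] by blast
  have "proj Q x = g"
    using proj_eqI[OF Q x g H2_closest_point_orthogonal[OF Q x g min]] .
  then show "proj Q x \<in> Q" "\<And>h. h \<in> Q \<Longrightarrow> h2_inner (\<lambda>\<alpha>. x \<alpha> - proj Q x \<alpha>) h = 0"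
    using g H2_closest_point_orthogonal[OF Q x g min] by auto
qed

section \<open>Shifts and quotient modules\<close>

definition shift :: "('n::finite \<Rightarrow> nat) \<Rightarrow> 'n coeffs \<Rightarrow> 'n coeffs" where
  "shift \<gamma> f = (\<lambda>\<alpha>. if \<gamma> \<le> \<alpha> then f (\<lambda>i. \<alpha> i - \<gamma> i) else 0)"

definition shift_adj :: "('n::finite \<Rightarrow> nat) \<Rightarrow> 'n coeffs \<Rightarrow> 'n coeffs" where
  "shift_adj \<gamma> h = (\<lambda>\<alpha>. h (\<lambda>i. \<alpha> i + \<gamma> i))"

lemma quotient_module_shift_adj:
  assumes Q: "quotient_module Q" and h: "h \<in> Q"
  shows "shift_adj \<gamma> h \<in> Q"
proof (induction "sum \<gamma> UNIV" arbitrary: \<gamma> rule: less_induct)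
  case less
  show ?case
  proof (cases "\<gamma> = (\<lambda>i. 0)")
    case True
    then show ?thesis using h by (simp add: shift_adj_def)
  next
    case False
    then obtain i where i: "\<gamma> i > 0" by (auto simp: fun_eq_iff)
    define \<gamma>' where "\<gamma>' = \<gamma>(i := \<gamma> i - 1)"
    have "sum \<gamma>' UNIV < sum \<gamma> UNIV"
      using i sum.remove[of UNIV i \<gamma>] sum.remove[of UNIV i \<gamma>'] by (simp add: \<gamma>'_def)
    then have "Tz_adj i (shift_adj \<gamma>' h) \<in> Q"
      using Q less.hyps unfolding quotient_module_def by blast
    moreover have "Tz_adj i (shift_adj \<gamma>' h) = shift_adj \<gamma> h"
      using i by (auto simp: Tz_adj_def shift_adj_def \<gamma>'_def intro!: ext arg_cong[where f=h])
    ultimately show ?thesis by simp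
  qed
qed

lemma shift_reindex:
  fixes G :: "('n::finite \<Rightarrow> nat) \<Rightarrow> 'a::{comm_monoid_add,topological_space}"
  shows "((\<lambda>\<alpha>. if \<gamma> \<le> \<alpha> then G \<alpha> else 0) has_sum S) UNIV
    \<longleftrightarrow> ((\<lambda>\<beta>. G (\<lambda>i. \<beta> i + \<gamma> i)) has_sum S) UNIV"
proof -
  have range: "range (\<lambda>\<beta> i. \<beta> i + \<gamma> i) = {\<alpha>. \<gamma> \<le> \<alpha>}"
  proof (intro set_eqI iffI)
    fix \<alpha> assume "\<alpha> \<in> {\<alpha>. \<gamma> \<le> \<alpha>}"
    show "\<alpha> \<in> range (\<lambda>\<beta> i. \<beta> i + \<gamma> i)"
    proof (rule image_eqI[where x="\<lambda>i. \<alpha> i - \<gamma> i"])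
      show "\<alpha> = (\<lambda>i. \<alpha> i - \<gamma> i + \<gamma> i)" using \<open>\<alpha> \<in> _\<close> by (auto simp: le_fun_def fun_eq_iff)
    qed simp
  qed (auto simp: le_fun_def)
  have "((\<lambda>\<alpha>. if \<gamma> \<le> \<alpha> then G \<alpha> else 0) has_sum S) UNIV \<longleftrightarrow> (G has_sum S) {\<alpha>. \<gamma> \<le> \<alpha>}"
    by (rule has_sum_cong_neutral) auto
  also have "\<dots> \<longleftrightarrow> ((\<lambda>\<beta>. G (\<lambda>i. \<beta> i + \<gamma> i)) has_sum S) UNIV"
  proof -
    have "inj (\<lambda>\<beta> i. \<beta> i + \<gamma> i)" by (rule injI) (simp add: fun_eq_iff)
    then show ?thesis unfolding range[symmetric] by (simp add: has_sum_reindex o_def)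
  qed
  finally show ?thesis .
qed

lemma shift_reindex_infsum:
  fixes G :: "('n::finite \<Rightarrow> nat) \<Rightarrow> 'a::{comm_monoid_add,t2_space}"
  shows "(\<Sum>\<^sub>\<infinity>\<alpha>. if \<gamma> \<le> \<alpha> then G \<alpha> else 0) = (\<Sum>\<^sub>\<infinity>\<beta>. G (\<lambda>i. \<beta> i + \<gamma> i))"
proof (cases "(\<lambda>\<beta>. G (\<lambda>i. \<beta> i + \<gamma> i)) summable_on UNIV")
  case True
  have "((\<lambda>\<alpha>. if \<gamma> \<le> \<alpha> then G \<alpha> else 0) has_sum (\<Sum>\<^sub>\<infinity>\<beta>. G (\<lambda>i. \<beta> i + \<gamma> i))) UNIV"
    unfolding shift_reindex using True by (rule has_sum_infsum)
  then show ?thesis by (rule infsumI)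
next
  case False
  then have "\<not> (\<lambda>\<alpha>. if \<gamma> \<le> \<alpha> then G \<alpha> else 0) summable_on UNIV"
    unfolding summable_on_def shift_reindex .
  then show ?thesis using False by (simp add: infsum_not_exists)
qed

lemma H2_shift:
  assumes "f \<in> H2"
  shows "shift \<gamma> f \<in> H2"
proof -
  have "(\<lambda>\<alpha>. (cmod (shift \<gamma> f \<alpha>))\<^sup>2) = (\<lambda>\<alpha>. if \<gamma> \<le> \<alpha> then (cmod (f (\<lambda>i. \<alpha> i - \<gamma> i)))\<^sup>2 else 0)"
    by (simp add: shift_def fun_eq_iff)
  then have "((\<lambda>\<alpha>. (cmod (shift \<gamma> f \<alpha>))\<^sup>2) has_sum h2_sqnorm f) UNIV"
    using shift_reindex[of \<gamma> "\<lambda>\<alpha>. (cmod (f (\<lambda>i. \<alpha> i - \<gamma> i)))\<^sup>2"] has_sum_h2_sqnorm[OF assms]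
    by simp
  then show ?thesis by (auto simp: H2_def summable_on_def)
qed

lemma h2_inner_shift: "h2_inner (shift \<gamma> f) h = h2_inner f (shift_adj \<gamma> h)"
proof -
  have "(\<lambda>\<alpha>. shift \<gamma> f \<alpha> * cnj (h \<alpha>)) = (\<lambda>\<alpha>. if \<gamma> \<le> \<alpha> then f (\<lambda>i. \<alpha> i - \<gamma> i) * cnj (h \<alpha>) else 0)"
    by (simp add: shift_def fun_eq_iff)
  then show ?thesis
    using shift_reindex_infsum[of \<gamma> "\<lambda>\<alpha>. f (\<lambda>i. \<alpha> i - \<gamma> i) * cnj (h \<alpha>)"]
    by (simp add: h2_inner_def shift_adj_def)
qed

lemma finite_le_set: "finite {\<beta>::'n::finite \<Rightarrow> nat. \<beta> \<le> \<alpha>}"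
  by (rule finite_subset[of _ "PiE UNIV (\<lambda>i. {..\<alpha> i})"]) (auto simp: le_fun_def intro: finite_PiE)

lemma mult_finite_support_eq_sum_shift:
  assumes "finite C" "{\<gamma>. q \<gamma> \<noteq> 0} \<subseteq> C"
  shows "mult \<psi> q \<alpha> = (\<Sum>\<gamma>\<in>C. q \<gamma> * shift \<gamma> \<psi> \<alpha>)"
proof -
  have "mult \<psi> q \<alpha> = (\<Sum>\<gamma>\<in>{\<gamma>. \<gamma> \<le> \<alpha>}. q \<gamma> * \<psi> (\<lambda>i. \<alpha> i - \<gamma> i))"
    unfolding mult_def
    by (rule sum.reindex_bij_witness[where i="\<lambda>\<gamma> i. \<alpha> i - \<gamma> i" and j="\<lambda>\<gamma> i. \<alpha> i - \<gamma> i"])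
      (auto simp: le_fun_def fun_eq_iff mult.commute intro!: arg_cong[where f=\<psi>])
  also have "\<dots> = (\<Sum>\<gamma>\<in>C. q \<gamma> * shift \<gamma> \<psi> \<alpha>)"
    using assms finite_le_set[of \<alpha>]
    by (intro sum.mono_neutral_cong) (auto simp: shift_def subset_iff)
  finally show ?thesis .
qed

text \<open>\<open>\<langle>z\<^sup>\<gamma> \<psi>, h\<rangle> = \<langle>\<psi>, shift_adj \<gamma> h\<rangle>\<close>, and \<open>Q\<close> is invariant under \<open>shift_adj \<gamma>\<close>.\<close>
lemma quotient_module_orthogonal_mult_poly:
  assumes Q: "quotient_module Q" and \<psi>: "\<psi> \<in> H2" and orth: "\<And>h. h \<in> Q \<Longrightarrow> h2_inner \<psi> h = 0"
    and q: "finite {\<gamma>. q \<gamma> \<noteq> 0}" and h: "h \<in> Q"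
  shows "h2_inner (mult \<psi> q) h = 0"
proof -
  define C where "C = {\<gamma>. q \<gamma> \<noteq> 0}"
  have hH: "h \<in> H2" using h Q closed_subspace_H2 by (auto simp: quotient_module_def)
  have "mult \<psi> q = (\<lambda>\<alpha>. \<Sum>\<gamma>\<in>C. q \<gamma> * shift \<gamma> \<psi> \<alpha>)"
    by (intro ext mult_finite_support_eq_sum_shift) (simp_all add: C_def q)
  then have "h2_inner (mult \<psi> q) h = (\<Sum>\<gamma>\<in>C. h2_inner (\<lambda>\<alpha>. q \<gamma> * shift \<gamma> \<psi> \<alpha>) h)"
    using h2_inner_sum_left[of C "\<lambda>\<gamma> \<alpha>. q \<gamma> * shift \<gamma> \<psi> \<alpha>" h] q hH
    by (simp add: C_def H2_scale H2_shift \<psi>)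
  also have "\<dots> = (\<Sum>\<gamma>\<in>C. q \<gamma> * h2_inner \<psi> (shift_adj \<gamma> h))"
    by (simp add: h2_inner_scale_left h2_inner_shift)
  also have "\<dots> = 0" using orth quotient_module_shift_adj[OF Q h] by simp
  finally show ?thesis .
qed

section \<open>Bounded holomorphic functions are bounded multipliers\<close>

definition monomial :: "('n::finite \<Rightarrow> complex) \<Rightarrow> ('n \<Rightarrow> nat) \<Rightarrow> complex" where
  "monomial z \<alpha> = (\<Prod>i\<in>UNIV. z i ^ \<alpha> i)"

definition radius_weight :: "real \<Rightarrow> ('n::finite \<Rightarrow> nat) \<Rightarrow> real" where
  "radius_weight r \<alpha> = (\<Prod>i\<in>UNIV. r ^ \<alpha> i)"

lemma h2_eval_eq_monomial: "h2_eval f z = (\<Sum>\<^sub>\<infinity>\<alpha>. f \<alpha> * monomial z \<alpha>)"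
  by (simp add: h2_eval_def monomial_def)

lemma monomial_add: "monomial z (\<lambda>i. \<beta> i + \<gamma> i) = monomial z \<beta> * monomial z \<gamma>"
  by (simp add: monomial_def power_add prod.distrib)

lemma norm_monomial_le: "(\<And>i. cmod (z i) \<le> r) \<Longrightarrow> cmod (monomial z \<alpha>) \<le> radius_weight r \<alpha>"
  unfolding monomial_def radius_weight_def prod_norm[symmetric] norm_power
  by (rule prod_mono) (auto intro: power_mono)

lemma norm_monomial_eq: "(\<And>i. cmod (z i) = r) \<Longrightarrow> cmod (monomial z \<alpha>) = radius_weight r \<alpha>"
  by (simp add: monomial_def radius_weight_def prod_norm[symmetric] norm_power)

lemma radius_weight_nonneg: "r \<ge> 0 \<Longrightarrow> radius_weight r \<alpha> \<ge> 0"
  by (simp add: radius_weight_def prod_nonneg)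

lemma radius_weight_le_1: "0 \<le> r \<Longrightarrow> r \<le> 1 \<Longrightarrow> radius_weight r \<alpha> \<le> 1"
  unfolding radius_weight_def by (rule prod_le_1) (auto simp: power_le_one)

definition index_box :: "nat \<Rightarrow> ('n::finite \<Rightarrow> nat) set" where
  "index_box N = {\<alpha>. \<forall>i. \<alpha> i < N}"

lemma index_box_eq_PiE: "index_box N = PiE UNIV (\<lambda>_. {..<N})"
  by (auto simp: index_box_def PiE_UNIV_domain)

lemma finite_index_box: "finite (index_box N)"
  unfolding index_box_eq_PiE by (rule finite_PiE) auto

lemma index_box_mono: "L \<le> N \<Longrightarrow> index_box L \<subseteq> index_box N"
  by (auto simp: index_box_def intro: less_le_trans)

lemma finite_subset_index_box:
  fixes F :: "('n::finite \<Rightarrow> nat) set"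
  assumes "finite F"
  obtains L where "F \<subseteq> index_box L"
proof -
  define L where "L = Suc (Max (\<Union>\<alpha>\<in>F. range \<alpha>))"
  have "F \<subseteq> index_box L"
    using assms by (auto simp: index_box_def L_def intro!: le_imp_less_Suc Max_ge)
  then show thesis by (rule that)
qed

lemma sum_index_box_prod:
  fixes F :: "'n::finite \<Rightarrow> nat \<Rightarrow> 'a::comm_semiring_1"
  shows "(\<Sum>k\<in>index_box N. \<Prod>i\<in>UNIV. F i (k i)) = (\<Prod>i\<in>(UNIV::'n set). \<Sum>j<N. F i j)"
  unfolding index_box_eq_PiE by (rule prod_sum_PiE[symmetric]) auto

lemma finite_downset:
  assumes "finite B"
  shows "finite {\<beta>::'n::finite \<Rightarrow> nat. \<exists>\<alpha>\<in>B. \<beta> \<le> \<alpha>}"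
proof -
  have "{\<beta>. \<exists>\<alpha>\<in>B. \<beta> \<le> \<alpha>} = (\<Union>\<alpha>\<in>B. {\<beta>::'n \<Rightarrow> nat. \<beta> \<le> \<alpha>})" by blast
  then show ?thesis using assms by (simp add: finite_le_set)
qed

lemma sum_weighted_le_h2_sqnorm:
  assumes "0 \<le> r" "r \<le> 1" "f \<in> H2" "finite B"
  shows "(\<Sum>\<alpha>\<in>B. (cmod (f \<alpha>))\<^sup>2 * (radius_weight r \<alpha>)\<^sup>2) \<le> h2_sqnorm f"
proof -
  have "(\<Sum>\<alpha>\<in>B. (cmod (f \<alpha>))\<^sup>2 * (radius_weight r \<alpha>)\<^sup>2) \<le> (\<Sum>\<alpha>\<in>B. (cmod (f \<alpha>))\<^sup>2)"
    using radius_weight_le_1[OF assms(1,2)] radius_weight_nonneg[OF assms(1)]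
    by (intro sum_mono mult_left_le) (auto intro!: power_le_one)
  also have "\<dots> \<le> h2_sqnorm f" by (rule sum_le_h2_sqnorm[OF assms(3,4)])
  finally show ?thesis .
qed

lemma sum_radius_weight_le:
  fixes F :: "('n::finite \<Rightarrow> nat) set"
  assumes "0 \<le> r" "r < 1" "finite F"
  shows "sum (radius_weight r) F \<le> (1 / (1 - r)) ^ CARD('n)"
proof -
  obtain L where L: "F \<subseteq> index_box L" using finite_subset_index_box[OF assms(3)] .
  have "sum (radius_weight r) F \<le> sum (radius_weight r) (index_box L :: ('n \<Rightarrow> nat) set)"
    by (rule sum_mono2[OF finite_index_box L]) (simp add: radius_weight_nonneg assms)
  also have "\<dots> = (\<Prod>i\<in>(UNIV::'n set). \<Sum>j<L. r ^ j)"
    unfolding radius_weight_def by (rule sum_index_box_prod)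
  also have "\<dots> \<le> (\<Prod>i\<in>(UNIV::'n set). 1 / (1 - r))"
  proof (rule prod_mono)
    have "(\<Sum>j<L. r ^ j) = (1 - r ^ L) / (1 - r)"
      using assms sum_gp_strict[of r L] by (simp add: field_simps)
    also have "\<dots> \<le> 1 / (1 - r)" using assms by (intro divide_right_mono) auto
    finally show "0 \<le> (\<Sum>j<L. r ^ j) \<and> (\<Sum>j<L. r ^ j) \<le> 1 / (1 - r)"
      using assms by (auto intro: sum_nonneg)
  qed
  finally show ?thesis by simp
qed

lemma summable_radius_weight:
  assumes "0 \<le> r" "r < 1"
  shows "(radius_weight r :: ('n::finite \<Rightarrow> nat) \<Rightarrow> real) summable_on UNIV"
proof (rule nonneg_bdd_above_summable_on)
  show "bdd_above (sum (radius_weight r) ` {F :: ('n \<Rightarrow> nat) set. F \<subseteq> UNIV \<and> finite F})"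
    by (rule bdd_aboveI2[where M="(1 / (1 - r)) ^ CARD('n)"])
      (use sum_radius_weight_le assms in auto)
qed (simp add: radius_weight_nonneg assms)

lemma abs_summable_h2_eval:
  assumes f: "f \<in> H2" and r: "0 \<le> r" "r < 1" and z: "\<And>i. cmod (z i) \<le> r"
  shows "(\<lambda>\<alpha>. norm (f \<alpha> * monomial z \<alpha>)) summable_on UNIV"
proof (rule summable_on_comparison_test)
  show "(\<lambda>\<alpha>. sqrt (h2_sqnorm f) * radius_weight r \<alpha>) summable_on UNIV"
    by (intro summable_on_cmult_right summable_radius_weight r)
  have "cmod (f \<alpha>) \<le> sqrt (h2_sqnorm f)" for \<alpha>
    using coeff_le_h2_sqnorm[OF f] by (simp add: real_le_rsqrt)
  then show "norm (f \<alpha> * monomial z \<alpha>) \<le> sqrt (h2_sqnorm f) * radius_weight r \<alpha>" for \<alpha>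
    unfolding norm_mult by (intro mult_mono norm_monomial_le z) (auto simp: h2_sqnorm_nonneg)
qed simp

lemma polydisc_radius:
  assumes "z \<in> polydisc"
  obtains r where "0 \<le> r" "r < 1" "\<And>i. cmod (z i) \<le> r"
proof -
  define r where "r = Max (range (\<lambda>i. cmod (z i)))"
  have "cmod (z i) \<le> r" for i unfolding r_def by (rule Max_ge) auto
  moreover have "r \<in> range (\<lambda>i. cmod (z i))" unfolding r_def by (rule Max_in) auto
  ultimately show thesis using that[of r] assms by (auto simp: polydisc_def)
qed

lemma h2_eval_diff:
  assumes "f \<in> H2" "g \<in> H2" "z \<in> polydisc"
  shows "h2_eval (\<lambda>\<alpha>. f \<alpha> - g \<alpha>) z = h2_eval f z - h2_eval g z"
proof -
  obtain r where r: "0 \<le> r" "r < 1" "\<And>i. cmod (z i) \<le> r"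
    using polydisc_radius[OF assms(3)] by blast
  have "((\<lambda>\<alpha>. f \<alpha> * monomial z \<alpha> - g \<alpha> * monomial z \<alpha>) has_sum (h2_eval f z - h2_eval g z)) UNIV"
    unfolding h2_eval_eq_monomial
    by (intro has_sum_diff has_sum_infsum abs_summable_summable[OF abs_summable_h2_eval[OF _ r]]
        assms)
  then show ?thesis
    unfolding h2_eval_eq_monomial[of "\<lambda>\<alpha>. f \<alpha> - g \<alpha>"] by (simp add: left_diff_distrib infsumI)
qed

lemma h2_eval_one: "h2_eval one z = 1"
proof -
  have "h2_eval one z = (\<Sum>\<^sub>\<infinity>\<alpha>\<in>{\<lambda>i. 0}. one \<alpha> * monomial z \<alpha>)"
    unfolding h2_eval_eq_monomial by (rule infsum_cong_neutral) (auto simp: one_def)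
  then show ?thesis by (simp add: one_def monomial_def)
qed

lemma infsum_tail_small:
  fixes t :: "'a \<Rightarrow> real"
  assumes "t summable_on UNIV" "\<epsilon> > 0"
  obtains A0 where "finite A0" "\<And>A. finite A \<Longrightarrow> A0 \<subseteq> A \<Longrightarrow> \<bar>infsum t (UNIV - A)\<bar> < \<epsilon>"
proof -
  have "(sum t \<longlongrightarrow> infsum t UNIV) (finite_subsets_at_top UNIV)"
    using has_sum_infsum[OF assms(1)] unfolding has_sum_def .
  then have "eventually (\<lambda>A. dist (sum t A) (infsum t UNIV) < \<epsilon>) (finite_subsets_at_top UNIV)"
    using assms(2) by (rule tendstoD)
  then obtain A0 where A0: "finite A0" "\<And>A. finite A \<Longrightarrow> A0 \<subseteq> A \<Longrightarrow> dist (sum t A) (infsum t UNIV) < \<epsilon>"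
    by (auto simp: eventually_finite_subsets_at_top)
  show thesis
  proof (rule that[OF A0(1)])
    fix A assume A: "finite A" "A0 \<subseteq> A"
    have "infsum t (UNIV - A) = infsum t UNIV - sum t A"
      using infsum_Diff[OF assms(1), of A] A by simp
    then show "\<bar>infsum t (UNIV - A)\<bar> < \<epsilon>"
      using A0(2)[OF A] by (simp add: dist_real_def abs_minus_commute)
  qed
qed

definition unit_root :: "nat \<Rightarrow> complex" where
  "unit_root N = exp (2 * of_real pi * \<i> / of_nat N)"

lemma norm_unit_root: "cmod (unit_root N) = 1"
  by (simp add: unit_root_def norm_exp_eq_Re)

lemma unit_root_power_eq_1_iff:
  assumes "N \<ge> 1"
  shows "unit_root N ^ j = 1 \<longleftrightarrow> N dvd j"
proof -
  have "unit_root N ^ j = exp (2 * of_real pi * \<i> * of_nat j / of_nat N)"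
    unfolding unit_root_def exp_of_nat_mult[symmetric] by (simp add: field_simps)
  then show ?thesis using assms by (simp add: complex_root_unity_eq_1)
qed

lemma cnj_unit_root_power:
  assumes "N \<ge> 1" "m \<le> N"
  shows "cnj (unit_root N ^ m) = unit_root N ^ (N - m)"
proof -
  have "cnj (unit_root N ^ m) * unit_root N ^ m = 1"
    using complex_norm_square[of "unit_root N ^ m"]
    by (simp add: norm_power norm_unit_root mult.commute)
  moreover have "unit_root N ^ (N - m) * unit_root N ^ m = 1"
    using unit_root_power_eq_1_iff[OF assms(1), of N] assms(2) by (simp flip: power_add)
  moreover have "unit_root N ^ m \<noteq> 0" using norm_unit_root[of N] by (auto simp: norm_power)
  ultimately show ?thesis by (metis mult_right_cancel)
qed

lemma sum_unit_root_orthogonal: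
  assumes N: "N \<ge> 1" and a: "a < N" and b: "b < N"
  shows "(\<Sum>j<N. unit_root N ^ (j * a) * cnj (unit_root N ^ (j * b)))
    = (if a = b then of_nat N else 0)"
proof -
  define w where "w = unit_root N"
  define q where "q = w ^ (a + (N - b))"
  have "w ^ (j * a) * cnj (w ^ (j * b)) = q ^ j" for j
  proof -
    have "w ^ (j * a) * cnj (w ^ (j * b)) = (w ^ a * cnj (w ^ b)) ^ j"
      by (simp add: power_mult_distrib power_mult mult.commute[of j])
    also have "w ^ a * cnj (w ^ b) = q"
      using b by (simp add: q_def w_def cnj_unit_root_power[OF N] less_imp_le del: complex_cnj_power
          flip: power_add)
    finally show ?thesis .
  qed
  then have sum_eq: "(\<Sum>j<N. unit_root N ^ (j * a) * cnj (unit_root N ^ (j * b))) = (\<Sum>j<N. q ^ j)"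
    by (simp add: w_def)
  show ?thesis
  proof (cases "a = b")
    case True
    then have "q = 1" using b unit_root_power_eq_1_iff[OF N, of N] by (simp add: q_def w_def)
    then show ?thesis using True sum_eq by simp
  next
    case False
    have "\<not> N dvd (a + (N - b))"
    proof
      assume "N dvd a + (N - b)"
      then obtain m where m: "a + (N - b) = N * m" by (auto simp: dvd_def)
      moreover have "0 < a + (N - b)" "a + (N - b) < N * 2" using a b by auto
      ultimately have "0 < m" "m < 2" by auto
      then have "a + (N - b) = N" using m by (simp add: numeral_2_eq_2 less_Suc_eq)
      then show False using False a b by simp
    qed
    then have "q \<noteq> 1" using unit_root_power_eq_1_iff[OF N] by (simp add: q_def w_def)
    moreover have "q ^ N = 1"
      using unit_root_power_eq_1_iff[OF N, of "(a + (N - b)) * N"]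
      by (simp add: q_def w_def power_mult)
    ultimately show ?thesis using False sum_eq by (simp add: geometric_sum)
  qed
qed

definition grid_point :: "real \<Rightarrow> nat \<Rightarrow> ('n::finite \<Rightarrow> nat) \<Rightarrow> 'n \<Rightarrow> complex" where
  "grid_point r N k = (\<lambda>i. of_real r * unit_root N ^ k i)"

lemma norm_grid_point: "r \<ge> 0 \<Longrightarrow> cmod (grid_point r N k i) = r"
  by (simp add: grid_point_def norm_mult norm_power norm_unit_root)

definition grid_character :: "nat \<Rightarrow> ('n::finite \<Rightarrow> nat) \<Rightarrow> ('n \<Rightarrow> nat) \<Rightarrow> complex" where
  "grid_character N k \<alpha> = (\<Prod>i\<in>UNIV. unit_root N ^ (k i * \<alpha> i))"

lemma monomial_grid_point:
  "monomial (grid_point r N k) \<alpha> = of_real (radius_weight r \<alpha>) * grid_character N k \<alpha>"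
  by (simp add: monomial_def grid_point_def radius_weight_def grid_character_def power_mult_distrib
      prod.distrib flip: power_mult)

lemma sum_grid_character_orthogonal:
  fixes \<alpha> \<beta> :: "'n::finite \<Rightarrow> nat"
  assumes N: "N \<ge> 1" and "\<alpha> \<in> index_box N" "\<beta> \<in> index_box N"
  shows "(\<Sum>k\<in>index_box N. grid_character N k \<alpha> * cnj (grid_character N k \<beta>))
    = (if \<alpha> = \<beta> then of_nat N ^ CARD('n) else 0)"
proof -
  have "(\<Sum>k\<in>index_box N. grid_character N k \<alpha> * cnj (grid_character N k \<beta>))
      = (\<Sum>k\<in>index_box N. \<Prod>i\<in>UNIV. unit_root N ^ (k i * \<alpha> i) * cnj (unit_root N ^ (k i * \<beta> i)))"
    unfolding grid_character_def cnj_prod prod.distrib ..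
  also have "\<dots> = (\<Prod>i\<in>(UNIV::'n set). \<Sum>j<N. unit_root N ^ (j * \<alpha> i) * cnj (unit_root N ^ (j * \<beta> i)))"
    by (rule sum_index_box_prod)
  also have "\<dots> = (\<Prod>i\<in>(UNIV::'n set). if \<alpha> i = \<beta> i then of_nat N else 0)"
    using assms by (intro prod.cong refl sum_unit_root_orthogonal N) (auto simp: index_box_def)
  also have "\<dots> = (if \<alpha> = \<beta> then of_nat N ^ CARD('n) else 0)"
    by (auto simp: fun_eq_iff prod_zero_iff)
  finally show ?thesis .
qed

lemma discrete_parseval:
  fixes a :: "('n::finite \<Rightarrow> nat) \<Rightarrow> complex"
  assumes N: "N \<ge> 1"
  shows "(\<Sum>k\<in>index_box N. (cmod (\<Sum>\<alpha>\<in>index_box N. a \<alpha> * monomial (grid_point r N k) \<alpha>))\<^sup>2)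
    = real N ^ CARD('n) * (\<Sum>\<alpha>\<in>index_box N. (cmod (a \<alpha>))\<^sup>2 * (radius_weight r \<alpha>)\<^sup>2)"
proof -
  define c where "c \<alpha> = a \<alpha> * of_real (radius_weight r \<alpha>)" for \<alpha>
  have "a \<alpha> * monomial (grid_point r N k) \<alpha> = c \<alpha> * grid_character N k \<alpha>" for k \<alpha>
    by (simp add: monomial_grid_point c_def mult.assoc)
  then have "complex_of_real
      (\<Sum>k\<in>index_box N. (cmod (\<Sum>\<alpha>\<in>index_box N. a \<alpha> * monomial (grid_point r N k) \<alpha>))\<^sup>2)
      = (\<Sum>k\<in>index_box N. (\<Sum>\<alpha>\<in>index_box N. c \<alpha> * grid_character N k \<alpha>)
          * cnj (\<Sum>\<beta>\<in>index_box N. c \<beta> * grid_character N k \<beta>))"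
    unfolding of_real_sum complex_norm_square by simp
  also have "\<dots> = (\<Sum>k\<in>index_box N. \<Sum>\<alpha>\<in>index_box N. \<Sum>\<beta>\<in>index_box N.
      c \<alpha> * cnj (c \<beta>) * (grid_character N k \<alpha> * cnj (grid_character N k \<beta>)))"
    unfolding cnj_sum sum_product by (simp add: mult_ac)
  also have "\<dots> = (\<Sum>\<alpha>\<in>index_box N. \<Sum>k\<in>index_box N. \<Sum>\<beta>\<in>index_box N.
      c \<alpha> * cnj (c \<beta>) * (grid_character N k \<alpha> * cnj (grid_character N k \<beta>)))"
    by (rule sum.swap)
  also have "\<dots> = (\<Sum>\<alpha>\<in>index_box N. \<Sum>\<beta>\<in>index_box N. \<Sum>k\<in>index_box N.
      c \<alpha> * cnj (c \<beta>) * (grid_character N k \<alpha> * cnj (grid_character N k \<beta>)))"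
    by (rule sum.cong[OF refl]) (rule sum.swap)
  also have "\<dots> = (\<Sum>\<alpha>\<in>index_box N. \<Sum>\<beta>\<in>index_box N. c \<alpha> * cnj (c \<beta>)
      * (\<Sum>k\<in>index_box N. grid_character N k \<alpha> * cnj (grid_character N k \<beta>)))"
    by (simp add: sum_distrib_left)
  also have "\<dots> = (\<Sum>\<alpha>\<in>index_box N. \<Sum>\<beta>\<in>index_box N.
      if \<alpha> = \<beta> then c \<alpha> * cnj (c \<beta>) * of_nat N ^ CARD('n) else 0)"
    by (intro sum.cong refl) (simp add: sum_grid_character_orthogonal[OF N])
  also have "\<dots> = (\<Sum>\<alpha>\<in>index_box N. c \<alpha> * cnj (c \<alpha>) * of_nat N ^ CARD('n))"
    by (intro sum.cong refl) (simp add: finite_index_box)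
  also have "\<dots> = complex_of_real
      (real N ^ CARD('n) * (\<Sum>\<alpha>\<in>index_box N. (cmod (a \<alpha>))\<^sup>2 * (radius_weight r \<alpha>)\<^sup>2))"
  proof -
    have "c \<alpha> * cnj (c \<alpha>) = complex_of_real ((cmod (a \<alpha>))\<^sup>2 * (radius_weight r \<alpha>)\<^sup>2)" for \<alpha>
    proof -
      have "c \<alpha> * cnj (c \<alpha>) = complex_of_real ((cmod (c \<alpha>))\<^sup>2)"
        by (rule complex_norm_square[symmetric])
      also have "(cmod (c \<alpha>))\<^sup>2 = (cmod (a \<alpha>))\<^sup>2 * (radius_weight r \<alpha>)\<^sup>2"
        by (simp add: c_def norm_mult power_mult_distrib)
      finally show ?thesis .
    qed
    then show ?thesis by (simp add: sum_distrib_left mult_ac)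
  qed
  finally show ?thesis by (simp only: of_real_eq_iff)
qed

lemma mult_local:
  "(\<And>\<beta>. \<beta> \<le> \<alpha> \<Longrightarrow> f \<beta> = g \<beta>) \<Longrightarrow> mult \<psi> f \<alpha> = mult \<psi> g \<alpha>"
  unfolding mult_def by (intro sum.cong refl arg_cong2[where f=times]) (auto simp: le_fun_def)

lemma mult_local_left:
  "(\<And>\<beta>. \<beta> \<le> \<alpha> \<Longrightarrow> f \<beta> = g \<beta>) \<Longrightarrow> mult f \<psi> \<alpha> = mult g \<psi> \<alpha>"
  unfolding mult_def by (rule sum.cong) auto

lemma sum_shift_monomial:
  fixes a :: "('n::finite \<Rightarrow> nat) \<Rightarrow> complex"
  assumes a: "{\<beta>. a \<beta> \<noteq> 0} \<subseteq> index_box L" and \<gamma>: "\<gamma> \<in> index_box L"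
  shows "(\<Sum>\<alpha>\<in>index_box (2 * L). shift \<gamma> a \<alpha> * monomial z \<alpha>)
    = monomial z \<gamma> * (\<Sum>\<beta>\<in>index_box L. a \<beta> * monomial z \<beta>)"
proof -
  define T where "T \<beta> = (\<lambda>i. \<beta> i + \<gamma> i)" for \<beta> :: "'n \<Rightarrow> nat"
  have "(\<Sum>\<alpha>\<in>index_box (2 * L). shift \<gamma> a \<alpha> * monomial z \<alpha>)
      = (\<Sum>\<alpha>\<in>T ` index_box L. shift \<gamma> a \<alpha> * monomial z \<alpha>)"
  proof (rule sum.mono_neutral_right[OF finite_index_box])
    show "T ` index_box L \<subseteq> index_box (2 * L)"
      using \<gamma> by (auto simp: T_def index_box_def) (metis add_less_mono mult_2)
    show "\<forall>\<alpha>\<in>index_box (2 * L) - T ` index_box L. shift \<gamma> a \<alpha> * monomial z \<alpha> = 0"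
    proof
      fix \<alpha> assume \<alpha>: "\<alpha> \<in> index_box (2 * L) - T ` index_box L"
      show "shift \<gamma> a \<alpha> * monomial z \<alpha> = 0"
      proof (cases "\<gamma> \<le> \<alpha>")
        case True
        then have "\<alpha> = T (\<lambda>i. \<alpha> i - \<gamma> i)" by (auto simp: T_def le_fun_def fun_eq_iff)
        then have "(\<lambda>i. \<alpha> i - \<gamma> i) \<notin> index_box L" using \<alpha> by (metis DiffD2 imageI)
        then show ?thesis using True a by (auto simp: shift_def)
      qed (simp add: shift_def)
    qed
  qed
  also have "\<dots> = (\<Sum>\<beta>\<in>index_box L. a \<beta> * monomial z (T \<beta>))"
    by (subst sum.reindex) (auto simp: inj_on_def T_def fun_eq_iff shift_def le_fun_def)
  finally show ?thesis by (simp add: T_def monomial_add sum_distrib_left mult_ac)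
qed

lemma monomial_mult_eval:
  fixes a b :: "('n::finite \<Rightarrow> nat) \<Rightarrow> complex"
  assumes a: "{\<beta>. a \<beta> \<noteq> 0} \<subseteq> index_box L" and b: "{\<gamma>. b \<gamma> \<noteq> 0} \<subseteq> index_box L"
  shows "(\<Sum>\<beta>\<in>index_box L. a \<beta> * monomial z \<beta>) * (\<Sum>\<gamma>\<in>index_box L. b \<gamma> * monomial z \<gamma>)
    = (\<Sum>\<alpha>\<in>index_box (2 * L). mult a b \<alpha> * monomial z \<alpha>)"
proof -
  have "(\<Sum>\<alpha>\<in>index_box (2 * L). mult a b \<alpha> * monomial z \<alpha>)
      = (\<Sum>\<alpha>\<in>index_box (2 * L). \<Sum>\<gamma>\<in>index_box L. b \<gamma> * (shift \<gamma> a \<alpha> * monomial z \<alpha>))"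
    unfolding mult_finite_support_eq_sum_shift[OF finite_index_box b]
    by (simp add: sum_distrib_right mult.assoc)
  also have "\<dots> = (\<Sum>\<gamma>\<in>index_box L. \<Sum>\<alpha>\<in>index_box (2 * L). b \<gamma> * (shift \<gamma> a \<alpha> * monomial z \<alpha>))"
    by (rule sum.swap)
  also have "\<dots> = (\<Sum>\<gamma>\<in>index_box L. b \<gamma> * (monomial z \<gamma> * (\<Sum>\<beta>\<in>index_box L. a \<beta> * monomial z \<beta>)))"
    by (intro sum.cong refl) (simp add: sum_shift_monomial[OF a] flip: sum_distrib_left)
  also have "\<dots> = (\<Sum>\<beta>\<in>index_box L. a \<beta> * monomial z \<beta>) * (\<Sum>\<gamma>\<in>index_box L. b \<gamma> * monomial z \<gamma>)"
    by (simp add: sum_distrib_left sum_distrib_right mult_ac)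
  finally show ?thesis ..
qed

text \<open>Parseval on the grid of \<open>2L\<close>-th roots of unity scaled by \<open>r\<close>, which sees the
  coefficients of the product exactly, turns a pointwise bound for \<open>a\<close> on the grid into a
  multiplier bound.\<close>
lemma mult_weighted_bound_grid:
  fixes a q :: "('n::finite \<Rightarrow> nat) \<Rightarrow> complex"
  assumes a: "{\<beta>. a \<beta> \<noteq> 0} \<subseteq> index_box L" and q: "{\<gamma>. q \<gamma> \<noteq> 0} \<subseteq> index_box L"
    and L: "L \<ge> 1"
    and bound: "\<And>k. cmod (\<Sum>\<beta>\<in>index_box L. a \<beta> * monomial (grid_point r (2 * L) k) \<beta>) \<le> K"
  shows "(\<Sum>\<alpha>\<in>index_box (2 * L). (cmod (mult a q \<alpha>))\<^sup>2 * (radius_weight r \<alpha>)\<^sup>2)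
    \<le> K\<^sup>2 * (\<Sum>\<alpha>\<in>index_box (2 * L). (cmod (q \<alpha>))\<^sup>2 * (radius_weight r \<alpha>)\<^sup>2)"
proof -
  define N where "N = 2 * L"
  have N: "N \<ge> 1" using L by (simp add: N_def)
  define P where "P a' k = (\<Sum>\<beta>\<in>index_box L. a' \<beta> * monomial (grid_point r N k) \<beta>)"
    for a' :: "('n \<Rightarrow> nat) \<Rightarrow> complex" and k
  have q_N: "P q k = (\<Sum>\<alpha>\<in>index_box N. q \<alpha> * monomial (grid_point r N k) \<alpha>)" for k
    unfolding P_def N_def
    by (rule sum.mono_neutral_left[OF finite_index_box index_box_mono]) (use q in auto)
  have "real N ^ CARD('n) * (\<Sum>\<alpha>\<in>index_box N. (cmod (mult a q \<alpha>))\<^sup>2 * (radius_weight r \<alpha>)\<^sup>2)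
      = (\<Sum>k\<in>index_box N. (cmod (P a k * P q k))\<^sup>2)"
    unfolding P_def N_def monomial_mult_eval[OF a q]
    by (rule discrete_parseval[symmetric, OF N[unfolded N_def]])
  also have "\<dots> \<le> (\<Sum>k\<in>index_box N. K\<^sup>2 * (cmod (P q k))\<^sup>2)"
  proof (rule sum_mono)
    fix k
    have "(cmod (P a k))\<^sup>2 \<le> K\<^sup>2" using bound[of k] by (simp add: P_def N_def power_mono)
    then show "(cmod (P a k * P q k))\<^sup>2 \<le> K\<^sup>2 * (cmod (P q k))\<^sup>2"
      by (simp add: norm_mult power_mult_distrib mult_right_mono)
  qed
  also have "\<dots>
      = real N ^ CARD('n) * (K\<^sup>2 * (\<Sum>\<alpha>\<in>index_box N. (cmod (q \<alpha>))\<^sup>2 * (radius_weight r \<alpha>)\<^sup>2))"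
    unfolding q_N sum_distrib_left[symmetric] discrete_parseval[OF N] by simp
  finally show ?thesis using N by (simp add: N_def)
qed

lemma h2_eval_truncation_bound:
  fixes \<psi> :: "'n::finite coeffs"
  assumes \<psi>: "\<psi> \<in> H2" and M: "\<And>z. z \<in> polydisc \<Longrightarrow> cmod (h2_eval \<psi> z) \<le> M"
    and r: "0 \<le> r" "r < 1" and \<epsilon>: "\<epsilon> > 0" and B: "finite B"
  obtains A where "finite A" "B \<subseteq> A"
    "\<And>z. (\<And>i. cmod (z i) = r) \<Longrightarrow> cmod (\<Sum>\<beta>\<in>A. \<psi> \<beta> * monomial z \<beta>) \<le> M + \<epsilon>"
proof -
  define t where "t \<beta> = cmod (\<psi> \<beta>) * radius_weight r \<beta>" for \<beta>
  have norm_eq: "norm (\<psi> \<beta> * monomial z \<beta>) = t \<beta>" if "\<And>i. cmod (z i) = r" for z \<beta>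
    by (simp add: t_def norm_mult norm_monomial_eq[OF that])
  have "(\<lambda>\<beta>. norm (\<psi> \<beta> * monomial (\<lambda>_. of_real r) \<beta>)) summable_on UNIV"
    by (rule abs_summable_h2_eval[OF \<psi> r]) (simp add: r)
  then have "t summable_on UNIV" using norm_eq[of "\<lambda>_. of_real r"] r by simp
  then obtain A0 where "finite A0" and A0: "\<And>A. finite A \<Longrightarrow> A0 \<subseteq> A \<Longrightarrow> \<bar>infsum t (UNIV - A)\<bar> < \<epsilon>"
    using infsum_tail_small \<epsilon> by blast
  show thesis
  proof (rule that)
    show A: "finite (A0 \<union> B)" "B \<subseteq> A0 \<union> B" using \<open>finite A0\<close> B by auto
    fix z :: "'n \<Rightarrow> complex" assume z: "\<And>i. cmod (z i) = r"
    define f where "f = (\<lambda>\<beta>. \<psi> \<beta> * monomial z \<beta>)"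
    have fs: "(\<lambda>\<beta>. norm (f \<beta>)) summable_on UNIV"
      unfolding f_def by (rule abs_summable_h2_eval[OF \<psi> r]) (simp add: z)
    have "sum f (A0 \<union> B) = h2_eval \<psi> z - infsum f (UNIV - (A0 \<union> B))"
      using infsum_Diff[OF abs_summable_summable[OF fs], of "A0 \<union> B"] A
      by (simp add: h2_eval_eq_monomial f_def)
    moreover have "cmod (h2_eval \<psi> z) \<le> M" using z r by (intro M) (simp add: polydisc_def)
    moreover have "cmod (infsum f (UNIV - (A0 \<union> B))) \<le> \<epsilon>"
    proof -
      have "cmod (infsum f (UNIV - (A0 \<union> B))) \<le> infsum t (UNIV - (A0 \<union> B))"
        using norm_infsum_bound[OF summable_on_subset[OF fs, of "UNIV - (A0 \<union> B)"]]
        by (simp add: f_def norm_eq[OF z])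
      also have "\<dots> < \<epsilon>" using A0[OF A(1)] by auto
      finally show ?thesis by simp
    qed
    ultimately show "cmod (\<Sum>\<beta>\<in>A0 \<union> B. \<psi> \<beta> * monomial z \<beta>) \<le> M + \<epsilon>"
      using norm_triangle_ineq4[of "h2_eval \<psi> z" "infsum f (UNIV - (A0 \<union> B))"]
      by (simp add: f_def)
  qed
qed

lemma mult_weighted_bound:
  assumes \<psi>: "\<psi> \<in> H2" and M: "\<And>z. z \<in> polydisc \<Longrightarrow> cmod (h2_eval \<psi> z) \<le> M"
    and q: "finite {\<alpha>. q \<alpha> \<noteq> 0}" and B: "finite B"
    and r: "0 \<le> r" "r < 1" and \<epsilon>: "\<epsilon> > 0"
  shows "(\<Sum>\<alpha>\<in>B. (cmod (mult \<psi> q \<alpha>))\<^sup>2 * (radius_weight r \<alpha>)\<^sup>2) \<le> (M + \<epsilon>)\<^sup>2 * h2_sqnorm q"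
proof -
  define D where "D = {\<beta>. \<exists>\<alpha>\<in>B. \<beta> \<le> \<alpha>}"
  obtain A where A: "finite A" "D \<subseteq> A"
    and bound: "\<And>z. (\<And>i. cmod (z i) = r) \<Longrightarrow> cmod (\<Sum>\<beta>\<in>A. \<psi> \<beta> * monomial z \<beta>) \<le> M + \<epsilon>"
    using h2_eval_truncation_bound[OF \<psi> M r \<epsilon> finite_downset[OF B]] unfolding D_def by blast
  obtain L0 where "A \<union> B \<union> {\<alpha>. q \<alpha> \<noteq> 0} \<subseteq> index_box L0"
    using finite_subset_index_box[of "A \<union> B \<union> {\<alpha>. q \<alpha> \<noteq> 0}"] A B q by auto
  moreover define L where "L = max L0 1"
  ultimately have sub: "A \<subseteq> index_box L" "B \<subseteq> index_box L" "{\<alpha>. q \<alpha> \<noteq> 0} \<subseteq> index_box L"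
    using index_box_mono[of L0 L] by (auto simp: L_def)
  define \<psi>A where "\<psi>A \<beta> = (if \<beta> \<in> A then \<psi> \<beta> else 0)" for \<beta>
  have \<psi>A: "{\<beta>. \<psi>A \<beta> \<noteq> 0} \<subseteq> index_box L" using sub by (auto simp: \<psi>A_def)
  have grid: "cmod (\<Sum>\<beta>\<in>index_box L. \<psi>A \<beta> * monomial (grid_point r (2 * L) k) \<beta>) \<le> M + \<epsilon>" for k
  proof -
    have "(\<Sum>\<beta>\<in>index_box L. \<psi>A \<beta> * monomial (grid_point r (2 * L) k) \<beta>)
        = (\<Sum>\<beta>\<in>A. \<psi> \<beta> * monomial (grid_point r (2 * L) k) \<beta>)"
      using sub(1) A(1) by (intro sum.mono_neutral_cong_right finite_index_box) (auto simp: \<psi>A_def)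
    then show ?thesis using bound[of "grid_point r (2 * L) k", OF norm_grid_point[OF r(1)]] by simp
  qed
  have "mult \<psi> q \<alpha> = mult \<psi>A q \<alpha>" if "\<alpha> \<in> B" for \<alpha>
    by (rule mult_local_left) (use that A(2) in \<open>auto simp: \<psi>A_def D_def\<close>)
  then have "(\<Sum>\<alpha>\<in>B. (cmod (mult \<psi> q \<alpha>))\<^sup>2 * (radius_weight r \<alpha>)\<^sup>2)
      = (\<Sum>\<alpha>\<in>B. (cmod (mult \<psi>A q \<alpha>))\<^sup>2 * (radius_weight r \<alpha>)\<^sup>2)"
    by simp
  also have "\<dots> \<le> (\<Sum>\<alpha>\<in>index_box (2 * L). (cmod (mult \<psi>A q \<alpha>))\<^sup>2 * (radius_weight r \<alpha>)\<^sup>2)"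
    using sub(2) index_box_mono[of L "2 * L"] by (intro sum_mono2 finite_index_box) auto
  also have "\<dots> \<le> (M + \<epsilon>)\<^sup>2 * (\<Sum>\<alpha>\<in>index_box (2 * L). (cmod (q \<alpha>))\<^sup>2 * (radius_weight r \<alpha>)\<^sup>2)"
    by (rule mult_weighted_bound_grid[OF \<psi>A sub(3) _ grid]) (simp add: L_def)
  also have "\<dots> \<le> (M + \<epsilon>)\<^sup>2 * h2_sqnorm q"
    using sum_weighted_le_h2_sqnorm[OF r(1) _ H2_finite_support[OF q] finite_index_box] r(2)
    by (intro mult_left_mono) auto
  finally show ?thesis .
qed

text \<open>Let \<open>\<epsilon> \<rightarrow> 0\<close> and then \<open>r \<rightarrow> 1\<close> in \<open>mult_weighted_bound\<close>.\<close>
lemma mult_bound_finite_support: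
  assumes \<psi>: "\<psi> \<in> H2" and M: "\<And>z. z \<in> polydisc \<Longrightarrow> cmod (h2_eval \<psi> z) \<le> M"
    and q: "finite {\<alpha>. q \<alpha> \<noteq> 0}"
  shows "mult \<psi> q \<in> H2" and "h2_sqnorm (mult \<psi> q) \<le> M\<^sup>2 * h2_sqnorm q"
proof -
  have "(\<Sum>\<alpha>\<in>B. (cmod (mult \<psi> q \<alpha>))\<^sup>2) \<le> M\<^sup>2 * h2_sqnorm q" if B: "finite B" for B
  proof -
    define S where "S r = (\<Sum>\<alpha>\<in>B. (cmod (mult \<psi> q \<alpha>))\<^sup>2 * (radius_weight r \<alpha>)\<^sup>2)" for r
    have S_le: "S r \<le> M\<^sup>2 * h2_sqnorm q" if r: "0 \<le> r" "r < 1" for r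
    proof (rule tendsto_lowerbound)
      show "((\<lambda>\<epsilon>. (M + \<epsilon>)\<^sup>2 * h2_sqnorm q) \<longlongrightarrow> M\<^sup>2 * h2_sqnorm q) (at_right 0)"
        by (auto intro!: tendsto_eq_intros)
      show "eventually (\<lambda>\<epsilon>. S r \<le> (M + \<epsilon>)\<^sup>2 * h2_sqnorm q) (at_right 0)"
        using eventually_at_right_less[of "0::real"]
        by eventually_elim (simp add: S_def mult_weighted_bound[OF \<psi> M q B r])
    qed simp
    have "(S \<longlongrightarrow> S 1) (at_left 1)"
      unfolding S_def radius_weight_def by (intro tendsto_intros)
    moreover have "eventually (\<lambda>r. r \<in> {0<..<1}) (at_left (1::real))"
      by (rule eventually_at_left_real) simp
    then have "eventually (\<lambda>r. S r \<le> M\<^sup>2 * h2_sqnorm q) (at_left 1)"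
      by eventually_elim (simp add: S_le)
    ultimately have "S 1 \<le> M\<^sup>2 * h2_sqnorm q" by (rule tendsto_upperbound) simp
    then show ?thesis by (simp add: S_def radius_weight_def)
  qed
  then show "mult \<psi> q \<in> H2" "h2_sqnorm (mult \<psi> q) \<le> M\<^sup>2 * h2_sqnorm q"
    by (blast intro: H2_bounded_sums)+
qed

lemma mult_bound:
  assumes \<psi>: "\<psi> \<in> H2" and M: "\<And>z. z \<in> polydisc \<Longrightarrow> cmod (h2_eval \<psi> z) \<le> M" and g: "g \<in> H2"
  shows "mult \<psi> g \<in> H2" and "h2_sqnorm (mult \<psi> g) \<le> M\<^sup>2 * h2_sqnorm g"
proof -
  have "(\<Sum>\<alpha>\<in>B. (cmod (mult \<psi> g \<alpha>))\<^sup>2) \<le> M\<^sup>2 * h2_sqnorm g" if B: "finite B" for B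
  proof -
    define D where "D = {\<beta>. \<exists>\<alpha>\<in>B. \<beta> \<le> \<alpha>}"
    define gD where "gD \<beta> = (if \<beta> \<in> D then g \<beta> else 0)" for \<beta>
    have gD: "finite {\<beta>. gD \<beta> \<noteq> 0}"
      using finite_downset[OF B] by (rule finite_subset[rotated]) (auto simp: gD_def D_def)
    have "mult \<psi> g \<alpha> = mult \<psi> gD \<alpha>" if "\<alpha> \<in> B" for \<alpha>
      by (rule mult_local) (use that in \<open>auto simp: gD_def D_def\<close>)
    then have "(\<Sum>\<alpha>\<in>B. (cmod (mult \<psi> g \<alpha>))\<^sup>2) = (\<Sum>\<alpha>\<in>B. (cmod (mult \<psi> gD \<alpha>))\<^sup>2)"
      by simp
    also have "\<dots> \<le> h2_sqnorm (mult \<psi> gD)"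
      by (rule sum_le_h2_sqnorm[OF mult_bound_finite_support(1)[OF \<psi> M gD] B])
    also have "\<dots> \<le> M\<^sup>2 * h2_sqnorm gD" by (rule mult_bound_finite_support(2)[OF \<psi> M gD])
    also have "\<dots> \<le> M\<^sup>2 * h2_sqnorm g"
    proof (rule mult_left_mono)
      show "h2_sqnorm gD \<le> h2_sqnorm g"
        unfolding h2_sqnorm_def
        by (rule infsum_mono) (use g H2_finite_support[OF gD] in \<open>auto simp: H2_def gD_def\<close>)
    qed simp
    finally show ?thesis .
  qed
  then show "mult \<psi> g \<in> H2" "h2_sqnorm (mult \<psi> g) \<le> M\<^sup>2 * h2_sqnorm g"
    by (blast intro: H2_bounded_sums)+
qed

section \<open>The compression of the projected constant\<close>

lemma mult_one: "mult one f = f"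
proof
  fix \<alpha>
  have "mult one f \<alpha> = (\<Sum>\<beta>\<in>{\<beta>. \<beta> \<le> \<alpha>}. if \<beta> = (\<lambda>i. 0) then f \<alpha> else 0)"
    unfolding mult_def one_def by (rule sum.cong) auto
  also have "\<dots> = f \<alpha>" by (subst sum.delta[OF finite_le_set]) (simp add: le_fun_def)
  finally show "mult one f \<alpha> = f \<alpha>" .
qed

lemma mult_diff_left: "mult (\<lambda>\<alpha>. a \<alpha> - b \<alpha>) f = (\<lambda>\<alpha>. mult a f \<alpha> - mult b f \<alpha>)"
  by (simp add: mult_def sum_subtractf left_diff_distrib fun_eq_iff)

lemma mult_diff_right: "mult \<psi> (\<lambda>\<alpha>. a \<alpha> - b \<alpha>) = (\<lambda>\<alpha>. mult \<psi> a \<alpha> - mult \<psi> b \<alpha>)"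
  by (simp add: mult_def sum_subtractf right_diff_distrib fun_eq_iff)

lemma H2_truncation_close:
  assumes "f \<in> H2" "\<delta> > 0"
  obtains A where "finite A" "h2_sqnorm (\<lambda>\<alpha>. f \<alpha> - (if \<alpha> \<in> A then f \<alpha> else 0)) < \<delta>"
proof -
  obtain A where A: "finite A" "\<bar>\<Sum>\<^sub>\<infinity>\<alpha>\<in>UNIV - A. (cmod (f \<alpha>))\<^sup>2\<bar> < \<delta>"
    using infsum_tail_small[of "\<lambda>\<alpha>. (cmod (f \<alpha>))\<^sup>2" \<delta>] assms by (auto simp: H2_def)
  have "h2_sqnorm (\<lambda>\<alpha>. f \<alpha> - (if \<alpha> \<in> A then f \<alpha> else 0)) = (\<Sum>\<^sub>\<infinity>\<alpha>\<in>UNIV - A. (cmod (f \<alpha>))\<^sup>2)"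
    unfolding h2_sqnorm_def by (rule infsum_cong_neutral) auto
  then show thesis using that A by simp
qed

text \<open>By Cauchy--Schwarz, \<open>T\<^sub>\<psi>\<close> being bounded carries the orthogonality from polynomials to all
  of \<open>H\<^sup>2\<close>.\<close>
lemma quotient_module_orthogonal_mult:
  assumes Q: "quotient_module Q" and \<psi>: "\<psi> \<in> H2" and orth: "\<And>h. h \<in> Q \<Longrightarrow> h2_inner \<psi> h = 0"
    and M: "\<And>z. z \<in> polydisc \<Longrightarrow> cmod (h2_eval \<psi> z) \<le> M"
    and f: "f \<in> H2" and h: "h \<in> Q"
  shows "h2_inner (mult \<psi> f) h = 0"
proof -
  have hH: "h \<in> H2" using h Q closed_subspace_H2 by (auto simp: quotient_module_def)
  have bound: "(cmod (h2_inner (mult \<psi> f) h))\<^sup>2 \<le> M\<^sup>2 * \<delta> * h2_sqnorm h" if "\<delta> > 0" for \<delta>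
  proof -
    obtain A where A: "finite A" and small: "h2_sqnorm (\<lambda>\<alpha>. f \<alpha> - (if \<alpha> \<in> A then f \<alpha> else 0)) < \<delta>"
      using H2_truncation_close[OF f \<open>\<delta> > 0\<close>] .
    define fA where "fA \<alpha> = (if \<alpha> \<in> A then f \<alpha> else 0)" for \<alpha>
    have fA: "finite {\<alpha>. fA \<alpha> \<noteq> 0}" using A by (rule finite_subset[rotated]) (auto simp: fA_def)
    have diff: "(\<lambda>\<alpha>. f \<alpha> - fA \<alpha>) \<in> H2" by (intro H2_diff f H2_finite_support[OF fA])
    have "h2_inner (mult \<psi> f) h = h2_inner (mult \<psi> (\<lambda>\<alpha>. f \<alpha> - fA \<alpha>)) h"
      unfolding mult_diff_right
      using h2_inner_diff_left[OF mult_bound(1)[OF \<psi> M f]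
          mult_bound(1)[OF \<psi> M H2_finite_support[OF fA]] hH]
        quotient_module_orthogonal_mult_poly[OF Q \<psi> orth fA h]
      by simp
    also have "(cmod \<dots>)\<^sup>2 \<le> h2_sqnorm (mult \<psi> (\<lambda>\<alpha>. f \<alpha> - fA \<alpha>)) * h2_sqnorm h"
      by (rule h2_cauchy_schwarz[OF mult_bound(1)[OF \<psi> M diff] hH])
    also have "\<dots> \<le> M\<^sup>2 * \<delta> * h2_sqnorm h"
    proof (rule mult_right_mono)
      have "h2_sqnorm (mult \<psi> (\<lambda>\<alpha>. f \<alpha> - fA \<alpha>)) \<le> M\<^sup>2 * h2_sqnorm (\<lambda>\<alpha>. f \<alpha> - fA \<alpha>)"
        by (rule mult_bound(2)[OF \<psi> M diff])
      also have "\<dots> \<le> M\<^sup>2 * \<delta>" using small by (intro mult_left_mono) (auto simp: fA_def)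
      finally show "h2_sqnorm (mult \<psi> (\<lambda>\<alpha>. f \<alpha> - fA \<alpha>)) \<le> M\<^sup>2 * \<delta>" .
    qed (rule h2_sqnorm_nonneg)
    finally show ?thesis .
  qed
  have "(cmod (h2_inner (mult \<psi> f) h))\<^sup>2 \<le> 0"
  proof (rule tendsto_lowerbound)
    show "((\<lambda>\<delta>. M\<^sup>2 * \<delta> * h2_sqnorm h) \<longlongrightarrow> 0) (at_right 0)"
      by (auto intro!: tendsto_eq_intros)
    show "eventually (\<lambda>\<delta>. (cmod (h2_inner (mult \<psi> f) h))\<^sup>2 \<le> M\<^sup>2 * \<delta> * h2_sqnorm h) (at_right 0)"
      using eventually_at_right_less[of "0::real"] by eventually_elim (rule bound)
  qed simp
  then show ?thesis by simp
qed

lemma H2_one: "one \<in> H2"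
proof -
  have support: "{\<alpha>. one \<alpha> \<noteq> 0} = {\<lambda>i. 0}" by (auto simp: one_def)
  show ?thesis using H2_finite_support[of one] unfolding support by simp
qed

lemma Hinf_one_minus_bounded:
  assumes "\<theta> \<in> Hinf"
  obtains M where "\<And>z. z \<in> polydisc \<Longrightarrow> cmod (h2_eval (\<lambda>\<alpha>. one \<alpha> - \<theta> \<alpha>) z) \<le> M"
proof -
  obtain M where \<theta>: "\<theta> \<in> H2" and M: "\<And>z. z \<in> polydisc \<Longrightarrow> cmod (h2_eval \<theta> z) \<le> M"
    using assms by (auto simp: Hinf_def)
  have "cmod (h2_eval (\<lambda>\<alpha>. one \<alpha> - \<theta> \<alpha>) z) \<le> 1 + M" if "z \<in> polydisc" for z
    using M[OF that] norm_triangle_ineq4[of 1 "h2_eval \<theta> z"]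
    by (simp add: h2_eval_diff[OF H2_one \<theta> that] h2_eval_one)
  then show thesis by (rule that)
qed

lemma proj_mult_one_minus:
  assumes Q: "quotient_module Q" and \<psi>: "\<psi> \<in> H2" and orth: "\<And>h. h \<in> Q \<Longrightarrow> h2_inner \<psi> h = 0"
    and M: "\<And>z. z \<in> polydisc \<Longrightarrow> cmod (h2_eval \<psi> z) \<le> M" and f: "f \<in> Q"
  shows "proj Q (mult (\<lambda>\<alpha>. one \<alpha> - \<psi> \<alpha>) f) = f"
proof -
  have cs: "closed_subspace Q" using Q by (simp add: quotient_module_def)
  have fH: "f \<in> H2" using f closed_subspace_H2[OF cs] by auto
  have "mult (\<lambda>\<alpha>. one \<alpha> - \<psi> \<alpha>) f = (\<lambda>\<alpha>. f \<alpha> - mult \<psi> f \<alpha>)"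
    by (simp add: mult_diff_left mult_one)
  moreover have "proj Q (\<lambda>\<alpha>. f \<alpha> - mult \<psi> f \<alpha>) = f"
  proof (rule proj_eqI[OF cs H2_diff[OF fH mult_bound(1)[OF \<psi> M fH]] f])
    fix h assume "h \<in> Q"
    then show "h2_inner (\<lambda>\<alpha>. (f \<alpha> - mult \<psi> f \<alpha>) - f \<alpha>) h = 0"
      using quotient_module_orthogonal_mult[OF Q \<psi> orth M fH]
        h2_inner_scale_left[of "-1" "mult \<psi> f" h] by simp
  qed
  ultimately show ?thesis by simp
qed

theorem proposition6p4:
  fixes Q :: "('n::finite) coeffs set"
  assumes "quotient_module Q"
    and "proj Q one \<in> Hinf"
  shows "\<forall>f\<in>Q. compression Q (proj Q one) f = f"
proof
  fix f assume "f \<in> Q"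
  have Q: "closed_subspace Q" using assms(1) by (simp add: quotient_module_def)
  define \<psi> where "\<psi> = (\<lambda>\<alpha>. one \<alpha> - proj Q one \<alpha>)"
  have "proj Q one \<in> H2" using proj_orthogonal(1)[OF Q H2_one] closed_subspace_H2[OF Q] by auto
  then have \<psi>: "\<psi> \<in> H2" unfolding \<psi>_def by (rule H2_diff[OF H2_one])
  have orth: "h2_inner \<psi> h = 0" if "h \<in> Q" for h
    using proj_orthogonal(2)[OF Q H2_one that] by (simp add: \<psi>_def)
  obtain M where M: "\<And>z. z \<in> polydisc \<Longrightarrow> cmod (h2_eval \<psi> z) \<le> M"
    using Hinf_one_minus_bounded[OF assms(2)] unfolding \<psi>_def by blast
  have "proj Q one = (\<lambda>\<alpha>. one \<alpha> - \<psi> \<alpha>)" by (simp add: \<psi>_def)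
  then show "compression Q (proj Q one) f = f"
    using proj_mult_one_minus[OF assms(1) \<psi> orth M \<open>f \<in> Q\<close>] by (simp add: compression_def)
qed

end
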